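(* Let $a\in\mathbb{R}$, $T>0$, and let $\mathcal{G}_{\mathrm{adv}}$ and $\mu$ be as in the context. There exists $C>0$ such that for any $\epsilon\in(0,\tfrac12]$ there exists a (ReLU) FNO $\mathcal{N}^{\mathrm{FNO}}_\epsilon$ with grid size $N\le C\epsilon^{-1}$ such that \[ \mathbb{E}_{\bar u\sim\mu}\big[\|\mathcal{G}_{\mathrm{adv}}(\bar u)-\mathcal{N}^{\mathrm{FNO}}_\epsilon(\bar u)\|_{L^1(\mathbb{T})}\big]\le\epsilon, \] with Fourier cut-off $k_{\max}=1$, lifting dimension $d_v\le C$, $\mathrm{depth}(\mathcal{N}^{\mathrm{FNO}}_\epsilon)\le C\log(\epsilon^{-1})^2$ and $\mathrm{size}(\mathcal{N}^{\mathrm{FNO}}_\epsilon)\le C\log(\epsilon^{-1})^2$.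
   Context: $\mathbb{T}=\mathbb{R}/2\pi\mathbb{Z}$. Fix $0<\underline h\le\overline h$, $0<\underline w\le\overline w<2\pi$; $\mu$ is the law of $\bar u(x)=h\,1_{[-w/2,w/2]}(x-\xi)$ (periodized) with independent $h\sim\mathrm{Unif}[\underline h,\overline h]$, $w\sim\mathrm{Unif}[\underline w,\overline w]$, $\xi\sim\mathrm{Unif}[0,2\pi]$; $\mathcal{G}_{\mathrm{adv}}(\bar u)(x)=\bar u(x-aT)$. FNO with grid size $N$: let $x_j=2\pi j/N$, $j=1,\dots,N$, and for a (vector-valued) function $v$ on $\mathbb{T}$ let $\mathcal{F}_Nv(k)=\frac1N\sum_{j=1}^Nv(x_j)e^{-ikx_j}$. An FNO with lifting dimension $d_v$, Fourier cut-off $k_{\max}$, depth $L$ and ReLU activation $\sigma$ is $\mathcal{N}=Q\circ\mathcal{L}_L\circ\dots\circ\mathcal{L}_1\circ R$, where $(R\bar u)(x)=R(\bar u(x),x)$ with $R$ a shallow ReLU network into $\mathbb{R}^{d_v}$; $(\mathcal{L}_\ell v)(x)=\sigma\big(W_\ell v(x)+b_\ell(x)+(K_\ell v)(x)\big)$ with $W_\ell\in\mathbb{R}^{d_v\times d_v}$, $(K_\ell v)(x)=\sum_{|k|\le k_{\max}}P_\ell(k)\mathcal{F}_Nv(k)e^{ikx}$, $P_\ell(k)\in\mathbb{C}^{d_v\times d_v}$, and real bias $b_\ell(x)=\sum_{|k|\le k_{\max}}\hat b_\ell(k)e^{ikx}$; $Q$ is a linear map applied pointwise. Output functions are defined for all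 $x\in\mathbb{T}$. The depth is $L$ and the size is the total number of tunable parameters. *)

theory Defs
  imports "HOL-Analysis.Analysis" "HOL-Probability.Probability"
begin

text \<open>Functions on the torus are represented as (2pi-periodic) functions real => real.\<close>

definition relu :: "real \<Rightarrow> real" where
  "relu t = max 0 t"

definition tmod :: "real \<Rightarrow> real" where
  "tmod x = x - 2 * pi * of_int \<lfloor>x / (2 * pi)\<rfloor>"

definition ubar :: "real \<Rightarrow> real \<Rightarrow> real \<Rightarrow> real \<Rightarrow> real" where
  "ubar h w \<xi> x = (if \<exists>k::int. \<bar>x - \<xi> - 2 * pi * of_int k\<bar> \<le> w / 2 then h else 0)"

definition G_adv :: "real \<Rightarrow> real \<Rightarrow> (real \<Rightarrow> real) \<Rightarrow> (real \<Rightarrow> real)" where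
  "G_adv a T u = (\<lambda>x. u (x - a * T))"

definition unif_real :: "real \<Rightarrow> real \<Rightarrow> real measure" where
  "unif_real lo hi = (if lo < hi then uniform_measure lborel {lo..hi} else return borel lo)"

definition expect_mu ::
  "real \<Rightarrow> real \<Rightarrow> real \<Rightarrow> real \<Rightarrow> ((real \<Rightarrow> real) \<Rightarrow> ennreal) \<Rightarrow> ennreal" where
  "expect_mu hl hu wl wu \<Phi> =
     (\<integral>\<^sup>+ h. (\<integral>\<^sup>+ w. (\<integral>\<^sup>+ \<xi>. \<Phi> (ubar h w \<xi>) \<partial>unif_real 0 (2 * pi))
        \<partial>unif_real wl wu) \<partial>unif_real hl hu)"

definition L1_dist :: "(real \<Rightarrow> real) \<Rightarrow> (real \<Rightarrow> real) \<Rightarrow> ennreal" where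
  "L1_dist f g = (\<integral>\<^sup>+ x \<in> {0..2 * pi}. ennreal \<bar>f x - g x\<bar> \<partial>lborel)"

text \<open>Vectors in R^d are functions nat => real, only indices < d matter.
  R is a shallow ReLU network (hidden width fno_width) from R^2 to R^dv:
  R(y) = RB relu(RA y + Rc) + Rd.  Layer l (l < fno_L) has W l, the Fourier
  multipliers P l k (|k| <= kmax) and bias coefficients bh l k.\<close>
record fno =
  fno_N :: nat
  fno_dv :: nat
  fno_kmax :: nat
  fno_L :: nat
  fno_width :: nat
  fno_RA :: "nat \<Rightarrow> nat \<Rightarrow> real"
  fno_Rc :: "nat \<Rightarrow> real"
  fno_RB :: "nat \<Rightarrow> nat \<Rightarrow> real"
  fno_Rd :: "nat \<Rightarrow> real"
  fno_W :: "nat \<Rightarrow> nat \<Rightarrow> nat \<Rightarrow> real"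
  fno_P :: "nat \<Rightarrow> int \<Rightarrow> nat \<Rightarrow> nat \<Rightarrow> complex"
  fno_bh :: "nat \<Rightarrow> int \<Rightarrow> nat \<Rightarrow> complex"
  fno_Q :: "nat \<Rightarrow> real"

definition dft :: "nat \<Rightarrow> (real \<Rightarrow> real) \<Rightarrow> int \<Rightarrow> complex" where
  "dft N v k = (1 / of_nat N) *
     (\<Sum>j=1..N. complex_of_real (v (2 * pi * real j / real N))
                 * exp (- \<i> * of_int k * complex_of_real (2 * pi * real j / real N)))"

definition fno_lift :: "fno \<Rightarrow> (real \<Rightarrow> real) \<Rightarrow> real \<Rightarrow> nat \<Rightarrow> real" where
  "fno_lift F u x = (\<lambda>i. (\<Sum>r<fno_width F. fno_RB F i r *
       relu (fno_RA F r 0 * u x + fno_RA F r 1 * tmod x + fno_Rc F r)) + fno_Rd F i)"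

definition fno_layer :: "fno \<Rightarrow> nat \<Rightarrow> (real \<Rightarrow> nat \<Rightarrow> real) \<Rightarrow> real \<Rightarrow> nat \<Rightarrow> real" where
  "fno_layer F l v x = (\<lambda>i. relu (
       (\<Sum>j<fno_dv F. fno_W F l i j * v x j)
     + Re (\<Sum>k\<in>{- int (fno_kmax F)..int (fno_kmax F)}.
             fno_bh F l k i * exp (\<i> * of_int k * complex_of_real x))
     + Re (\<Sum>k\<in>{- int (fno_kmax F)..int (fno_kmax F)}. \<Sum>j<fno_dv F.
             fno_P F l k i j * dft (fno_N F) (\<lambda>y. v y j) k
             * exp (\<i> * of_int k * complex_of_real x))))"

fun fno_hidden :: "fno \<Rightarrow> nat \<Rightarrow> (real \<Rightarrow> real) \<Rightarrow> real \<Rightarrow> nat \<Rightarrow> real" where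
  "fno_hidden F 0 u = fno_lift F u"
| "fno_hidden F (Suc l) u = fno_layer F l (fno_hidden F l u)"

definition fno_eval :: "fno \<Rightarrow> (real \<Rightarrow> real) \<Rightarrow> real \<Rightarrow> real" where
  "fno_eval F u x = (\<Sum>i<fno_dv F. fno_Q F i * fno_hidden F (fno_L F) u x i)"

definition fno_depth :: "fno \<Rightarrow> nat" where
  "fno_depth F = fno_L F"

text \<open>Total number of real parameters (a complex parameter counts as two).\<close>
definition fno_size :: "fno \<Rightarrow> nat" where
  "fno_size F =
     (2 * fno_width F + fno_width F + fno_dv F * fno_width F + fno_dv F)
   + fno_L F * (fno_dv F * fno_dv F
                + 2 * (2 * fno_kmax F + 1) * fno_dv F * fno_dv F
                + 2 * (2 * fno_kmax F + 1) * fno_dv F)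
   + fno_dv F"

end

theory Submission
  imports Defs
begin

text \<open>The network reads three numbers off the sampled box: its relative width p (the grid mean,
  i.e. the k = 0 Fourier mode), its height h (recovered from the mean m = h p by the contraction
  H \<mapsto> (1 - p) H + m, whose error decays like (1 - p)^S) and, from the k = 1 mode, its centre
  \<mu> \<approx> \<xi> together with the Dirichlet factor c \<sim> sin (pi p). Rotating that mode by aT, the function
  c cos (x - aT - \<mu>) exceeds c cos (pi p) exactly on the advected box, and
  c cos (pi p) \<sim> sin (2 pi p) / 2 is produced by Horner's scheme for the Taylor polynomial of sin,
  one layer per degree. A ramp of slope N turns the comparison into h times an indicator. The output
  is wrong only near the box edges, on a set of measure O(1/N + Taylor remainder), so a grid of
  size N \<sim> 1/\<epsilon> and S \<sim> log (1/\<epsilon>) layers suffice.\<close>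

section \<open>Grid sampling of a box\<close>

definition grid_mean :: "nat \<Rightarrow> (real \<Rightarrow> real) \<Rightarrow> real" where
  "grid_mean N f = (1 / real N) * (\<Sum>j=1..N. f (2 * pi * real j / real N))"

lemma dft_zero: "dft N f 0 = complex_of_real (grid_mean N f)"
  unfolding dft_def grid_mean_def by (simp add: sum_divide_distrib)

lemma grid_mean_const: "N \<ge> 1 \<Longrightarrow> grid_mean N (\<lambda>y. c) = c"
  unfolding grid_mean_def by simp

lemma grid_mean_mult_const: "grid_mean N (\<lambda>y. f y * c) = grid_mean N f * c"
  unfolding grid_mean_def by (simp add: sum_distrib_right)

definition box_ind :: "real \<Rightarrow> real \<Rightarrow> real \<Rightarrow> real" where
  "box_ind w \<xi> x = (if \<exists>k::int. \<bar>x - \<xi> - 2 * pi * of_int k\<bar> \<le> w / 2 then 1 else 0)"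

lemma box_ind_01: "box_ind w \<xi> x = 0 \<or> box_ind w \<xi> x = 1"
  by (simp add: box_ind_def)

lemma ubar_eq_box_ind: "ubar h w \<xi> = (\<lambda>x. h * box_ind w \<xi> x)"
  by (auto simp: ubar_def box_ind_def fun_eq_iff)

lemma box_ind_grid_iff:
  assumes "N \<ge> 1"
  shows "box_ind w \<xi> (2 * pi * of_int j / real N) = 1 \<longleftrightarrow>
    (\<exists>k::int. \<lceil>(\<xi> - w/2) / (2*pi/real N)\<rceil> \<le> j - k * int N \<and> j - k * int N \<le> \<lfloor>(\<xi> + w/2) / (2*pi/real N)\<rfloor>)"
proof -
  have d: "2*pi/real N > 0" using assms by simp
  have "\<bar>2 * pi * of_int j / real N - \<xi> - 2 * pi * of_int k\<bar> \<le> w / 2 \<longleftrightarrow>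
     (\<lceil>(\<xi> - w/2) / (2*pi/real N)\<rceil> \<le> j - k * int N \<and> j - k * int N \<le> \<lfloor>(\<xi> + w/2) / (2*pi/real N)\<rfloor>)"
    for k :: int
  proof -
    have e: "2 * pi * of_int j / real N - 2 * pi * of_int k = of_int (j - k * int N) * (2*pi/real N)"
      using assms by (simp add: field_simps)
    have "\<bar>2 * pi * of_int j / real N - \<xi> - 2 * pi * of_int k\<bar> \<le> w / 2 \<longleftrightarrow>
          \<xi> - w/2 \<le> of_int (j - k * int N) * (2*pi/real N) \<and> of_int (j - k * int N) * (2*pi/real N) \<le> \<xi> + w/2"
      using e by (smt (verit))
    also have "\<dots> \<longleftrightarrow> (\<xi> - w/2) / (2*pi/real N) \<le> of_int (j - k * int N) \<and> of_int (j - k * int N) \<le> (\<xi> + w/2) / (2*pi/real N)"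
      by (simp only: pos_divide_le_eq[OF d] pos_le_divide_eq[OF d])
    finally show ?thesis by (simp add: ceiling_le_iff le_floor_iff)
  qed
  then show ?thesis unfolding box_ind_def by auto
qed

lemma bij_betw_window_residues:
  fixes A B N :: int
  assumes N: "0 < N" and len: "B - A + 1 \<le> N"
  shows "bij_betw (\<lambda>j. (j - 1) mod N + 1) {A..B} {j \<in> {1..N}. \<exists>k. A \<le> j - k * N \<and> j - k * N \<le> B}"
proof -
  define \<phi> where "\<phi> j = (j - 1) mod N + 1" for j
  have phi_eq: "\<phi> j = j - ((j - 1) div N) * N" for j
    by (simp add: \<phi>_def mod_div_mult_eq[symmetric] algebra_simps minus_div_mult_eq_mod[symmetric])
  have "inj_on \<phi> {A..B}"
  proof (rule inj_onI)
    fix a b assume a: "a \<in> {A..B}" and b: "b \<in> {A..B}" and "\<phi> a = \<phi> b"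
    then have "N dvd (a - b)"
      by (metis \<phi>_def add_right_cancel mod_eq_dvd_iff diff_diff_eq2 diff_add_cancel)
    then obtain q where q: "a - b = N * q" by (auto elim: dvdE)
    have "\<bar>a - b\<bar> < N" using a b len by auto
    then have "q = 0" using q N
      by (smt (verit, ccfv_SIG) mult_le_cancel_left1 mult_minus_right abs_of_nonneg zero_less_mult_iff)
    then show "a = b" using q by simp
  qed
  moreover have "\<phi> j \<in> {j \<in> {1..N}. \<exists>k. A \<le> j - k * N \<and> j - k * N \<le> B}" if "j \<in> {A..B}" for j
  proof -
    have "1 \<le> \<phi> j \<and> \<phi> j \<le> N" unfolding \<phi>_def using N
      by (simp add: pos_mod_bound pos_mod_sign add1_zle_eq)
    moreover have "A \<le> \<phi> j - (- ((j - 1) div N)) * N \<and> \<phi> j - (- ((j - 1) div N)) * N \<le> B"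
      using that by (simp add: phi_eq)
    ultimately show ?thesis unfolding mem_Collect_eq atLeastAtMost_iff by blast
  qed
  moreover have "y \<in> \<phi> ` {A..B}" if hy: "y \<in> {j \<in> {1..N}. \<exists>k. A \<le> j - k * N \<and> j - k * N \<le> B}" for y
  proof -
    obtain k where y: "1 \<le> y" "y \<le> N" "A \<le> y - k * N" "y - k * N \<le> B" using hy by auto
    have "(y - k * N - 1) mod N = (y - 1) mod N"
      by (metis (no_types, opaque_lifting) diff_diff_eq2 diff_add_cancel mod_mult_self1 add.commute
          diff_conv_add_uminus mult_minus_left)
    also have "\<dots> = y - 1" using y by (simp add: mod_pos_pos_trivial)
    finally have "\<phi> (y - k * N) = y" by (simp add: \<phi>_def)
    then show ?thesis using y by force
  qed
  ultimately show ?thesis unfolding bij_betw_def \<phi>_def[symmetric] by blast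
qed

lemma sum_grid_box_ind:
  fixes g :: "int \<Rightarrow> complex"
  assumes N: "N \<ge> 1" and len: "B - A + 1 \<le> int N"
    and A: "A = \<lceil>(\<xi> - w/2) / (2*pi/real N)\<rceil>" and B: "B = \<lfloor>(\<xi> + w/2) / (2*pi/real N)\<rfloor>"
    and per: "\<And>j k. g (j + k * int N) = g j"
  shows "(\<Sum>j=1..N. complex_of_real (box_ind w \<xi> (2 * pi * real j / real N)) * g (int j)) = (\<Sum>j\<in>{A..B}. g j)"
proof -
  define J where "J = {j \<in> {1..int N}. \<exists>k. A \<le> j - k * int N \<and> j - k * int N \<le> B}"
  have "g ((j - 1) mod int N + 1) = g j" for j
    using per[of "(j - 1) mod int N + 1" "(j - 1) div int N"] by (simp add: algebra_simps)
  then have "(\<Sum>j\<in>{A..B}. g j) = (\<Sum>j\<in>J. g j)"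
    using sum.reindex_bij_betw[OF bij_betw_window_residues[OF _ len], of g] N unfolding J_def by simp
  moreover have "(\<Sum>j=1..N. complex_of_real (box_ind w \<xi> (2 * pi * real j / real N)) * g (int j))
      = (\<Sum>j\<in>{1..int N}. complex_of_real (box_ind w \<xi> (2 * pi * of_int j / real N)) * g j)"
    using sum.reindex[of int "{1..N}" "\<lambda>j. complex_of_real (box_ind w \<xi> (2 * pi * of_int j / real N)) * g j"]
    by (simp add: image_int_atLeastAtMost)
  moreover have "\<dots> = (\<Sum>j\<in>{1..int N}. if j \<in> J then g j else 0)"
  proof (rule sum.cong[OF refl])
    fix j assume "j \<in> {1..int N}"
    then show "complex_of_real (box_ind w \<xi> (2 * pi * of_int j / real N)) * g j = (if j \<in> J then g j else 0)"
      using box_ind_grid_iff[OF N, of w \<xi> j] box_ind_01[of w \<xi>] unfolding J_def A B by auto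
  qed
  moreover have "(\<Sum>j\<in>{1..int N}. if j \<in> J then g j else 0) = (\<Sum>j\<in>J. g j)"
    by (simp add: sum.If_cases J_def) (rule sum.cong; auto)
  ultimately show ?thesis by simp
qed

lemma one_minus_cis: "1 - cis (- x) = cis (- x/2) * (2 * \<i> * complex_of_real (sin (x/2)))"
proof -
  have c: "cos x = 1 - 2 * sin (x/2) ^ 2" using cos_double_sin[of "x/2"] by simp
  have s: "sin x = 2 * sin (x/2) * cos (x/2)" using sin_double[of "x/2"] by simp
  show ?thesis by (simp add: complex_eq_iff c s power2_eq_square algebra_simps)
qed

lemma sum_cis_geometric:
  assumes "sin (d/2) \<noteq> 0"
  shows "(\<Sum>l<n. cis (- (real l * d))) =
    cis (- ((real n - 1) * d / 2)) * complex_of_real (sin (real n * d / 2) / sin (d / 2))"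
proof -
  have pow: "(\<Sum>l<n. cis (- (real l * d))) = (\<Sum>l<n. cis (- d) ^ l)"
    by (simp add: Complex.DeMoivre)
  have "(1 - cis (- d)) * (\<Sum>l<n. cis (- d) ^ l) = 1 - cis (- (real n * d))"
    using one_diff_power_eq[of "cis (-d)" n] by (simp add: Complex.DeMoivre)
  then have "(\<Sum>l<n. cis (- d) ^ l) =
      cis (- (real n * d)/2) * (2 * \<i> * complex_of_real (sin (real n * d/2)))
      / (cis (- d/2) * (2 * \<i> * complex_of_real (sin (d/2))))"
    using assms by (simp add: one_minus_cis field_simps)
  also have "\<dots> = (cis (- (real n * d)/2) / cis (- d/2)) * complex_of_real (sin (real n * d/2) / sin (d/2))"
    using assms by (simp add: field_simps)
  also have "cis (- (real n * d)/2) / cis (- d/2) = cis (- ((real n - 1) * d / 2))"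
    by (simp add: cis_divide algebra_simps diff_divide_distrib)
  finally show ?thesis using pow by simp
qed

lemma sum_cis_window:
  fixes A B :: int
  assumes sd: "sin (\<delta> / 2) \<noteq> 0" and AB: "A \<le> B"
  shows "(\<Sum>j\<in>{A..B}. cis (- (of_int j * \<delta>))) = cis (- ((of_int A + of_int B) * \<delta> / 2))
           * complex_of_real (sin ((of_int B - of_int A + 1) * \<delta> / 2) / sin (\<delta> / 2))"
proof -
  define n where "n = nat (B - A + 1)"
  have n: "real n = of_int B - of_int A + 1" "int n = B - A + 1" using AB by (simp_all add: n_def)
  have "(\<Sum>j\<in>{A..B}. cis (- (of_int j * \<delta>))) = (\<Sum>l<n. cis (- (of_int (A + int l) * \<delta>)))"
    by (rule sum.reindex_bij_witness[of _ "\<lambda>l. A + int l" "\<lambda>j. nat (j - A)"]) (use n in auto)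
  also have "\<dots> = cis (- (of_int A * \<delta>)) * (\<Sum>l<n. cis (- (real l * \<delta>)))"
    by (simp add: sum_distrib_left cis_mult algebra_simps)
  also have "\<dots> = cis (- (of_int A * \<delta>)) * cis (- ((real n - 1) * \<delta> / 2))
      * complex_of_real (sin (real n * \<delta> / 2) / sin (\<delta> / 2))"
    using sum_cis_geometric[OF sd, of n] by simp
  also have "cis (- (of_int A * \<delta>)) * cis (- ((real n - 1) * \<delta> / 2)) = cis (- ((of_int A + of_int B) * \<delta> / 2))"
    unfolding cis_mult n(1) by (rule arg_cong[where f = cis]) (simp add: field_simps)
  finally show ?thesis unfolding n(1) .
qed

lemma box_grid_window:
  fixes \<delta> w \<xi> :: real
  defines "A \<equiv> \<lceil>(\<xi> - w/2) / \<delta>\<rceil>" and "B \<equiv> \<lfloor>(\<xi> + w/2) / \<delta>\<rfloor>"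
  assumes d: "0 < \<delta>" and w: "\<delta> \<le> w"
  shows "A \<le> B" and "\<bar>(of_int A + of_int B) * \<delta> / 2 - \<xi>\<bar> \<le> \<delta> / 2"
    and "w - \<delta> \<le> (of_int B - of_int A + 1) * \<delta>" and "(of_int B - of_int A + 1) * \<delta> \<le> w + \<delta>"
proof -
  have "(\<xi> - w/2) / \<delta> \<le> of_int A" "of_int A < (\<xi> - w/2) / \<delta> + 1"
    unfolding A_def by linarith+
  then have a: "\<xi> - w/2 \<le> of_int A * \<delta>" "of_int A * \<delta> < \<xi> - w/2 + \<delta>"
    using d by (simp_all add: divide_le_eq less_divide_eq field_simps)
  have "of_int B \<le> (\<xi> + w/2) / \<delta>" "(\<xi> + w/2) / \<delta> < of_int B + 1"
    unfolding B_def by linarith+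
  then have b: "of_int B * \<delta> \<le> \<xi> + w/2" "\<xi> + w/2 < of_int B * \<delta> + \<delta>"
    using d by (simp_all add: divide_le_eq less_divide_eq field_simps)
  have "of_int A * \<delta> < (of_int B + 1) * \<delta>" using a b w by (simp add: algebra_simps)
  then have "real_of_int A < of_int B + 1" using d by simp
  then show "A \<le> B" by linarith
  show "\<bar>(of_int A + of_int B) * \<delta> / 2 - \<xi>\<bar> \<le> \<delta> / 2"
    using a b by (simp add: field_simps abs_le_iff)
  show "w - \<delta> \<le> (of_int B - of_int A + 1) * \<delta>" "(of_int B - of_int A + 1) * \<delta> \<le> w + \<delta>"
    using a b by (simp_all add: algebra_simps)
qed

text \<open>The box covers n consecutive grid points, so its first coefficient is a Dirichlet kernel.\<close>
lemma grid_coefficients_box_ind: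
  assumes N: "N \<ge> 2" and d: "\<delta> = 2 * pi / real N" and w1: "\<delta> \<le> w" and w2: "w + \<delta> \<le> 2 * pi"
  obtains n :: nat and \<mu> :: real where "1 \<le> n" "n \<le> N"
    "grid_mean N (box_ind w \<xi>) = real n / real N"
    "dft N (box_ind w \<xi>) 1 = cis (- \<mu>) * complex_of_real (sin (real n * \<delta> / 2) / (real N * sin (\<delta> / 2)))"
    "\<bar>\<mu> - \<xi>\<bar> \<le> \<delta> / 2" "\<bar>real n * \<delta> / 2 - w / 2\<bar> \<le> \<delta> / 2"
proof -
  define A where "A = \<lceil>(\<xi> - w/2) / \<delta>\<rceil>"
  define B where "B = \<lfloor>(\<xi> + w/2) / \<delta>\<rfloor>"
  have N1: "N \<ge> 1" and dpos: "\<delta> > 0" using N d by simp_all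
  note win = box_grid_window[OF dpos w1, of \<xi>, folded A_def B_def]
  have Nd: "real N * \<delta> = 2 * pi" using d N by simp
  have len: "B - A + 1 \<le> int N"
  proof -
    have "(of_int B - of_int A + 1) * \<delta> \<le> real N * \<delta>"
      using win(4) w2 Nd by (simp add: algebra_simps)
    then have "real_of_int (B - A + 1) \<le> real N" using dpos by simp
    then show ?thesis by linarith
  qed
  define n where "n = nat (B - A + 1)"
  have n_real: "real n = of_int B - of_int A + 1" using win(1) by (simp add: n_def)
  define \<mu> where "\<mu> = (of_int A + of_int B) * \<delta> / 2"
  have sd: "sin (\<delta> / 2) \<noteq> 0"
  proof -
    have "\<delta> \<le> pi" unfolding d using N by (simp add: field_simps)
    then show ?thesis using sin_gt_zero[of "\<delta>/2"] dpos by linarith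
  qed
  have "(\<Sum>j=1..N. complex_of_real (box_ind w \<xi> (2 * pi * real j / real N)) * 1) = (\<Sum>j\<in>{A..B}. 1)"
    by (rule sum_grid_box_ind[OF N1 len A_def[unfolded d] B_def[unfolded d]]) simp
  also have "\<dots> = of_nat n" by (simp add: n_def)
  finally have "complex_of_real (\<Sum>j=1..N. box_ind w \<xi> (2 * pi * real j / real N)) = of_real (real n)"
    by simp
  then have mean: "grid_mean N (box_ind w \<xi>) = real n / real N"
    unfolding of_real_eq_iff by (simp add: grid_mean_def)
  have per: "cis (- (of_int (j + k * int N) * \<delta>)) = cis (- (of_int j * \<delta>))" for j k :: int
  proof -
    have "- (of_int (j + k * int N) * \<delta>) = - (of_int j * \<delta>) + 2 * pi * of_int (- k)"
      using N by (simp add: d field_simps)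
    moreover have "cis (2 * pi * real_of_int (- k)) = 1" by (rule cis_multiple_2pi) simp
    ultimately show ?thesis by (simp only: cis_mult[symmetric]) simp
  qed
  have "dft N (box_ind w \<xi>) 1 = (1 / of_nat N) * (\<Sum>j\<in>{A..B}. cis (- (of_int j * \<delta>)))"
    unfolding dft_def sum_grid_box_ind[OF N1 len A_def[unfolded d] B_def[unfolded d] per, symmetric]
    by (simp add: d cis_conv_exp mult.commute)
  also have "\<dots> = cis (- \<mu>) * complex_of_real (sin (real n * \<delta> / 2) / (real N * sin (\<delta> / 2)))"
    unfolding sum_cis_window[OF sd win(1)] \<mu>_def n_real by (simp add: field_simps)
  finally have dft1: "dft N (box_ind w \<xi>) 1 = \<dots>" .
  have "\<bar>real n * \<delta> / 2 - w / 2\<bar> \<le> \<delta> / 2"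
    using win(3,4) unfolding n_real abs_le_iff by linarith
  moreover have "1 \<le> n" "n \<le> N" using win(1) len by (auto simp: n_def)
  ultimately show ?thesis using that mean dft1 win(2) \<mu>_def by blast
qed

lemma sin_ge_half_self: "0 \<le> (x::real) \<Longrightarrow> x \<le> 1 \<Longrightarrow> x / 2 \<le> sin x"
proof -
  assume x: "0 \<le> x" "x \<le> 1"
  have m: "\<bar>sin x - (\<Sum>m<3. sin_coeff m * x ^ m)\<bar> \<le> inverse (fact 3) * \<bar>x\<bar> ^ 3"
    by (rule Maclaurin_sin_bound)
  have s: "(\<Sum>m<3. sin_coeff m * x ^ m) = x" by (simp add: eval_nat_numeral sin_coeff_def)
  have f: "inverse (fact 3) * \<bar>x\<bar> ^ 3 = x ^ 3 / 6" using x by (simp add: fact_numeral field_simps)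
  have "x ^ 3 \<le> x"
    using mult_left_le[OF mult_le_one[OF x(2) x(1) x(2)] x(1)] by (simp add: power3_eq_cube mult.assoc)
  then have "\<bar>sin x - x\<bar> \<le> x / 6" using m unfolding s f by linarith
  then show ?thesis using abs_ge_minus_self[of "sin x - x"] x by linarith
qed

lemma sin_ge_sin_interval:
  assumes "0 \<le> a" "a \<le> pi / 2" "a \<le> x" "x \<le> pi - a"
  shows "sin a \<le> sin x"
proof (cases "x \<le> pi / 2")
  case True then show ?thesis using assms by (intro sin_monotone_2pi_le) auto
next
  case False
  have "sin a \<le> sin (pi - x)" using assms False by (intro sin_monotone_2pi_le) auto
  then show ?thesis by simp
qed

lemma cos_gap:
  assumes al: "0 < \<alpha>" "\<alpha> \<le> pi / 2" and t: "0 \<le> t" "t \<le> 2" and b: "\<alpha> \<le> b - t" "b + t \<le> pi - \<alpha>"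
  shows "sin \<alpha> * t / 2 \<le> cos (b - t) - cos b" and "sin \<alpha> * t / 2 \<le> cos b - cos (b + t)"
proof -
  have st: "t / 4 \<le> sin (t / 2)" using sin_ge_half_self[of "t/2"] t by simp
  have sa: "0 \<le> sin \<alpha>" using al by (intro sin_ge_zero) auto
  have "sin \<alpha> * t / 2 = 2 * sin \<alpha> * (t / 4)" by simp
  also have "\<dots> \<le> 2 * sin (b - t / 2) * sin (t / 2)"
    using sin_ge_sin_interval[of \<alpha> "b - t/2"] assms st sa by (intro mult_mono) auto
  also have "\<dots> = cos (b - t) - cos b"
    using cos_diff_cos[of "b - t" b] by (simp add: field_simps)
  finally show "sin \<alpha> * t / 2 \<le> cos (b - t) - cos b" .
  have "sin \<alpha> * t / 2 = 2 * sin \<alpha> * (t / 4)" by simp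
  also have "\<dots> \<le> 2 * sin (b + t / 2) * sin (t / 2)"
    using sin_ge_sin_interval[of \<alpha> "b + t/2"] assms st sa by (intro mult_mono) auto
  also have "\<dots> = cos b - cos (b + t)"
    using cos_diff_cos[of b "b + t"] by (simp add: field_simps)
  finally show "sin \<alpha> * t / 2 \<le> cos b - cos (b + t)" .
qed

lemma grid_sin_half_bounds:
  assumes "4 \<le> N"
  shows "pi / 2 \<le> real N * sin (pi / real N)" and "real N * sin (pi / real N) \<le> pi"
proof -
  have Npos: "0 < real N" using assms by simp
  have "pi / real N \<le> 1" using assms pi_less_4 by (simp add: divide_le_eq)
  then have "pi / real N / 2 \<le> sin (pi / real N)" using Npos by (intro sin_ge_half_self) auto
  then show "pi / 2 \<le> real N * sin (pi / real N)" using Npos by (simp add: field_simps)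
  have "sin (pi / real N) \<le> pi / real N" using Npos by (intro sin_x_le_x) simp
  then show "real N * sin (pi / real N) \<le> pi" using Npos by (simp add: field_simps)
qed

lemma power_div_fact_le_exp:
  fixes x :: real
  assumes "0 \<le> x"
  shows "x ^ n / fact n \<le> exp x"
proof -
  have "(\<Sum>k\<in>{n}. inverse (fact k) * x ^ k) \<le> (\<Sum>k. inverse (fact k) * x ^ k)"
    using assms by (intro sum_le_suminf[OF summable_exp]) auto
  then show ?thesis by (simp add: exp_def field_simps)
qed

lemma two_pi_power_div_fact_le:
  assumes "1 / 2 \<le> \<rho>"
  shows "(2 * pi) ^ S / fact S \<le> exp (4 * pi) * \<rho> ^ S"
proof -
  have "(4 * pi) ^ S = 2 ^ S * (2 * pi) ^ S"
    using power_mult_distrib[of 2 "2 * pi" S] by simp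
  then have "(2 * pi) ^ S / fact S \<le> exp (4 * pi) * (1 / 2) ^ S"
    using power_div_fact_le_exp[of "4 * pi" S] by (simp add: field_simps power_one_over)
  also have "\<dots> \<le> exp (4 * pi) * \<rho> ^ S" using assms by (intro mult_left_mono power_mono) auto
  finally show ?thesis .
qed

text \<open>With m = h p, the iteration H \<mapsto> (1 - p) H + m recovers the height h of a box from its
  mass m at the geometric rate (1 - p)^l, using only linear operations.\<close>
fun height_iter :: "real \<Rightarrow> real \<Rightarrow> nat \<Rightarrow> real" where
  "height_iter p m 0 = 0"
| "height_iter p m (Suc l) = height_iter p m l + m - p * height_iter p m l"

lemma height_iter_closed: "height_iter p (h * p) l = h * (1 - (1 - p) ^ l)"
proof (induction l)
  case (Suc l)
  then show ?case by (simp only: height_iter.simps power_Suc) (simp add: algebra_simps)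
qed simp

lemma height_iter_bounds:
  assumes "0 \<le> p" "p \<le> 1" "0 \<le> h"
  shows "0 \<le> height_iter p (h * p) l" "height_iter p (h * p) l \<le> h"
proof -
  have "0 \<le> (1 - p) ^ l" "(1 - p) ^ l \<le> 1" using assms by (simp_all add: power_le_one)
  then show "0 \<le> height_iter p (h * p) l" "height_iter p (h * p) l \<le> h"
    unfolding height_iter_closed using assms by (simp_all add: mult_left_le)
qed

definition sin_coeff_2pi :: "nat \<Rightarrow> real" where
  "sin_coeff_2pi k = sin_coeff k * (2 * pi) ^ k"

text \<open>Horner's scheme for the degree S Taylor polynomial of sin (2 pi p), shifted by K; the shift
  keeps all iterates nonnegative, so that a ReLU layer can carry them.\<close>
fun sin_horner :: "nat \<Rightarrow> real \<Rightarrow> real \<Rightarrow> nat \<Rightarrow> real" where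
  "sin_horner S K p 0 = K"
| "sin_horner S K p (Suc l) = sin_horner S K p l * p - K * p + sin_coeff_2pi (S - 1 - l) + K"

lemma sin_horner_eq_sum:
  "l \<le> S \<Longrightarrow> sin_horner S K p l - K = (\<Sum>k<l. sin_coeff_2pi (S - l + k) * p ^ k)"
proof (induction l)
  case 0 then show ?case by simp
next
  case (Suc l)
  have "sin_horner S K p (Suc l) - K = (sin_horner S K p l - K) * p + sin_coeff_2pi (S - 1 - l)"
    by (simp add: algebra_simps)
  also have "\<dots> = (\<Sum>k<l. sin_coeff_2pi (S - l + k) * p ^ Suc k) + sin_coeff_2pi (S - Suc l)"
    using Suc by (simp add: sum_distrib_right sum_distrib_left algebra_simps)
  also have "\<dots> = (\<Sum>k<Suc l. sin_coeff_2pi (S - Suc l + k) * p ^ k)"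
    unfolding sum.lessThan_Suc_shift using Suc.prems by (simp add: Suc_diff_Suc add.commute)
  finally show ?case .
qed

lemma sin_horner_dev:
  assumes "0 \<le> p" "p \<le> 1" "l \<le> S"
  shows "\<bar>sin_horner S K p l - K\<bar> \<le> (\<Sum>k<S. \<bar>sin_coeff_2pi k\<bar>)"
proof -
  have "\<bar>sin_horner S K p l - K\<bar> \<le> (\<Sum>k<l. \<bar>sin_coeff_2pi (S - l + k) * p ^ k\<bar>)"
    unfolding sin_horner_eq_sum[OF assms(3)] by (rule sum_abs)
  also have "\<dots> \<le> (\<Sum>k<l. \<bar>sin_coeff_2pi (S - l + k)\<bar>)"
    using assms by (intro sum_mono) (simp add: abs_mult mult_left_le power_le_one)
  also have "\<dots> = (\<Sum>k\<in>(\<lambda>k. S - l + k) ` {..<l}. \<bar>sin_coeff_2pi k\<bar>)"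
    by (subst sum.reindex) (auto simp: inj_on_def)
  also have "\<dots> \<le> (\<Sum>k<S. \<bar>sin_coeff_2pi k\<bar>)"
    using assms(3) by (intro sum_mono2) auto
  finally show ?thesis .
qed

lemma sin_horner_taylor:
  assumes "0 \<le> p" "p \<le> 1"
  shows "\<bar>(sin_horner S K p S - K) - sin (2 * pi * p)\<bar> \<le> (2 * pi) ^ S / fact S"
proof -
  have q: "sin_horner S K p S - K = (\<Sum>k<S. sin_coeff k * (2 * pi * p) ^ k)"
    using sin_horner_eq_sum[of S S K p] by (simp add: sin_coeff_2pi_def power_mult_distrib mult.assoc)
  have "\<bar>sin (2 * pi * p) - (\<Sum>k<S. sin_coeff k * (2 * pi * p) ^ k)\<bar> \<le> inverse (fact S) * \<bar>2 * pi * p\<bar> ^ S"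
    by (rule Maclaurin_sin_bound)
  also have "\<dots> \<le> inverse (fact S) * (2 * pi) ^ S"
    using assms by (intro mult_left_mono power_mono) (auto simp: abs_mult mult_left_le)
  finally show ?thesis unfolding q by (simp add: abs_minus_commute divide_inverse mult.commute)
qed

section \<open>The network\<close>

text \<open>The network carries six channels. The lifting recovers ind = relu (u / hl) - relu (u / hl - 1)
  from the input u = h * ind, since h \<ge> hl. After l < S Fourier layers, with p the grid mean of ind
  and m = h p, the channels hold
  ind, H_l, ind * H_l, Q_l, ind * Q_l, and m (h * ind before the first layer), where H_l is the height
  iterate and Q_l the shifted Horner iterate. Products with ind are formed as
  relu (X + Bc * ind - Bc); the means of ind * H_l and ind * Q_l are p H_l and p Q_l, which is all the
  iterations need. Layer S evaluates, through the k = 1 Fourier mode, the shifted box profile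
  c cos (x - s - \<mu>) minus the threshold \<beta> (Q_S - K), and forms the two ramps relu (M G) and
  relu (M G - 1); the last layer turns their difference into h times an approximate indicator.\<close>
definition adv_W :: "nat \<Rightarrow> real \<Rightarrow> real \<Rightarrow> real \<Rightarrow> real \<Rightarrow> nat \<Rightarrow> nat \<Rightarrow> nat \<Rightarrow> real" where
  "adv_W S Bc M Mh \<beta> l i j =
    (if l < S then
       (if (i = 0 \<and> j = 0) \<or> (i = 1 \<and> j = 1) \<or> (i = 2 \<and> j = 1) then 1
        else if (i = 2 \<and> j = 0) \<or> (i = 4 \<and> j = 0) then Bc else 0)
     else if l = S then
       (if (i = 0 \<and> j = 3) \<or> (i = 1 \<and> j = 3) then - M * \<beta>
        else if i = 2 \<and> j = 1 then 1 else 0)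
     else
       (if i = 0 \<and> j = 2 then 1 else if i = 0 \<and> j = 0 then Mh
        else if i = 0 \<and> j = 1 then - Mh else 0))"

definition adv_P :: "nat \<Rightarrow> real \<Rightarrow> real \<Rightarrow> real \<Rightarrow> nat \<Rightarrow> int \<Rightarrow> nat \<Rightarrow> nat \<Rightarrow> complex" where
  "adv_P S K M s l k i j =
    (if l < S \<and> k = 0 then
       (if (i = 1 \<and> j = 5) \<or> (i = 2 \<and> j = 5) \<or> (i = 3 \<and> j = 4) \<or> (i = 4 \<and> j = 4)
           \<or> (i = 5 \<and> j = 5) then 1
        else if (i = 1 \<and> j = 2) \<or> (i = 2 \<and> j = 2) then -1
        else if (i = 3 \<and> j = 0) \<or> (i = 4 \<and> j = 0) then - complex_of_real K else 0)
     else if l = S \<and> k = 1 \<and> j = 0 \<and> (i = 0 \<or> i = 1) then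
        complex_of_real M * exp (- \<i> * complex_of_real s)
     else 0)"

definition adv_bias :: "nat \<Rightarrow> real \<Rightarrow> real \<Rightarrow> real \<Rightarrow> real \<Rightarrow> real \<Rightarrow> nat \<Rightarrow> int \<Rightarrow> nat \<Rightarrow> complex" where
  "adv_bias S K Bc M Mh \<beta> l k i = complex_of_real
    (if k \<noteq> 0 then 0
     else if l < S then
       (if i = 2 then - Bc else if i = 3 then sin_coeff_2pi (S - 1 - l) + K
        else if i = 4 then sin_coeff_2pi (S - 1 - l) + K - Bc else 0)
     else if l = S then
       (if i = 0 then M * \<beta> * K else if i = 1 then M * \<beta> * K - 1 else 0)
     else (if i = 0 then - Mh else 0))"

definition adv_net :: "nat \<Rightarrow> nat \<Rightarrow> real \<Rightarrow> real \<Rightarrow> real \<Rightarrow> real \<Rightarrow> real \<Rightarrow> real \<Rightarrow> real \<Rightarrow> fno" where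
  "adv_net N S hl K Bc M Mh \<beta> s = \<lparr> fno_N = N, fno_dv = 6, fno_kmax = 1, fno_L = S + 2, fno_width = 2,
    fno_RA = (\<lambda>r i. if i = 0 \<and> r < 2 then 1 / hl else 0),
    fno_Rc = (\<lambda>r. if r = 1 then -1 else 0),
    fno_RB = (\<lambda>i r. if r = 0 then (if i = 0 then 1 else if i = 4 then K else if i = 5 then hl else 0)
                   else if r = 1 then (if i = 0 then -1 else if i = 4 then - K else 0) else 0),
    fno_Rd = (\<lambda>i. if i = 3 then K else 0),
    fno_W = adv_W S Bc M Mh \<beta>,
    fno_P = adv_P S K M s,
    fno_bh = adv_bias S K Bc M Mh \<beta>,
    fno_Q = (\<lambda>i. if i = 0 then 1 else 0) \<rparr>"

lemma sum_lessThan_6: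
  "(\<Sum>j<(6::nat). f j) = f 0 + f 1 + f 2 + f 3 + f 4 + (f 5 :: 'a::comm_monoid_add)"
  by (simp add: eval_nat_numeral add.assoc)

lemma fno_layer_adv_net:
  "fno_layer (adv_net N S hl K Bc M Mh \<beta> s) l v x i = relu (
     (\<Sum>j<6. adv_W S Bc M Mh \<beta> l i j * v x j)
     + Re (adv_bias S K Bc M Mh \<beta> l 0 i)
     + Re (\<Sum>j<6. adv_P S K M s l 0 i j * dft N (\<lambda>y. v y j) 0)
     + Re (\<Sum>j<6. adv_P S K M s l 1 i j * dft N (\<lambda>y. v y j) 1 * exp (\<i> * complex_of_real x)))"
proof -
  have "{- int 1..int 1} = {-1, 0, 1}" by auto
  moreover have "adv_P S K M s l (-1) i j = 0" for j by (simp add: adv_P_def)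
  moreover have "adv_bias S K Bc M Mh \<beta> l (-1) i = 0" "adv_bias S K Bc M Mh \<beta> l 1 i = 0"
    by (simp_all add: adv_bias_def)
  ultimately show ?thesis
    unfolding fno_layer_def adv_net_def fno.select_convs by (simp add: add.assoc del: Re_sum)
qed

definition adv_state ::
  "(real \<Rightarrow> real) \<Rightarrow> real \<Rightarrow> real \<Rightarrow> real \<Rightarrow> nat \<Rightarrow> real \<Rightarrow> nat \<Rightarrow> real \<Rightarrow> nat \<Rightarrow> real" where
  "adv_state ind h p m S K l x i =
     (if i = 0 then ind x else if i = 1 then height_iter p m l
      else if i = 2 then ind x * height_iter p m l
      else if i = 3 then sin_horner S K p l else if i = 4 then ind x * sin_horner S K p l
      else if l = 0 then h * ind x else m)"

lemma relu_id: "0 \<le> t \<Longrightarrow> relu t = t"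
  by (simp add: relu_def)

lemma relu_mult_indicator:
  assumes "I = 0 \<or> I = 1" "0 \<le> X" "X \<le> Bc"
  shows "relu (X + Bc * I - Bc) = I * X"
  using assms by (auto simp: relu_def)

lemma adv_net_lift:
  assumes hl: "0 < hl" "hl \<le> h" and ind01: "\<And>x. ind x = 0 \<or> ind x = 1" and i: "i < 6"
  shows "fno_hidden (adv_net N S hl K Bc M Mh \<beta> s) 0 (\<lambda>x. h * ind x) x i = adv_state ind h p m S K 0 x i"
proof -
  have "relu (1 / hl * (h * ind x)) = h * ind x / hl"
    and "relu (1 / hl * (h * ind x) - 1) = ind x * (h / hl - 1)"
    using ind01[of x] hl by (auto simp: relu_def field_simps)
  then have "fno_hidden (adv_net N S hl K Bc M Mh \<beta> s) 0 (\<lambda>x. h * ind x) x i =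
      (if i = 0 then h * ind x / hl - ind x * (h / hl - 1)
       else if i = 4 then K * (h * ind x / hl) - K * (ind x * (h / hl - 1))
       else if i = 5 then hl * (h * ind x / hl) else if i = 3 then K else 0)"
    by (simp add: adv_net_def fno_lift_def eval_nat_numeral)
  also have "\<dots> = adv_state ind h p m S K 0 x i"
    using i hl by (auto simp: adv_state_def field_simps less_Suc_eq numeral_eq_Suc)
  finally show ?thesis .
qed

lemma adv_net_layer:
  fixes ind :: "real \<Rightarrow> real" and N S :: nat and hl K Bc M Mh \<beta> s :: real
  defines "F \<equiv> adv_net N S hl K Bc M Mh \<beta> s"
  assumes N: "N \<ge> 1" and ind01: "\<And>x. ind x = 0 \<or> ind x = 1"
    and p: "p = grid_mean N ind" and m: "m = h * p" "0 \<le> m" and l: "l < S"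
    and H: "0 \<le> height_iter p m (Suc l)" "height_iter p m (Suc l) \<le> Bc"
    and Q: "0 \<le> sin_horner S K p (Suc l)" "sin_horner S K p (Suc l) \<le> Bc"
    and IH: "\<And>x i. i < 6 \<Longrightarrow> fno_hidden F l (\<lambda>x. h * ind x) x i = adv_state ind h p m S K l x i"
    and i: "i < 6"
  shows "fno_hidden F (Suc l) (\<lambda>x. h * ind x) x i = adv_state ind h p m S K (Suc l) x i"
proof -
  let ?v = "adv_state ind h p m S K l"
  have mean5: "grid_mean N (\<lambda>y. ?v y 5) = m"
    using N by (cases "l = 0") (auto simp: adv_state_def grid_mean_const p m grid_mean_def sum_distrib_left[symmetric])
  have mean0: "grid_mean N (\<lambda>y. ?v y 0) = p" by (simp add: adv_state_def p)
  have mean2: "grid_mean N (\<lambda>y. ?v y 2) = p * height_iter p m l"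
    by (simp add: adv_state_def p grid_mean_mult_const)
  have mean4: "grid_mean N (\<lambda>y. ?v y 4) = p * sin_horner S K p l"
    by (simp add: adv_state_def p grid_mean_mult_const)
  have "(\<lambda>y. fno_hidden F l (\<lambda>x. h * ind x) y j) = (\<lambda>y. ?v y j)" if "j < 6" for j
    using IH that by auto
  then have e: "fno_hidden F (Suc l) (\<lambda>x. h * ind x) x i = relu (
     (\<Sum>j<6. adv_W S Bc M Mh \<beta> l i j * ?v x j)
     + Re (adv_bias S K Bc M Mh \<beta> l 0 i)
     + Re (\<Sum>j<6. adv_P S K M s l 0 i j * complex_of_real (grid_mean N (\<lambda>y. ?v y j)))
     + Re (\<Sum>j<6. adv_P S K M s l 1 i j * dft N (\<lambda>y. ?v y j) 1 * exp (\<i> * complex_of_real x)))"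
    unfolding fno_hidden.simps F_def fno_layer_adv_net using IH by (simp add: sum_lessThan_6 dft_zero F_def)
  consider "i = 0" | "i = 1" | "i = 2" | "i = 3" | "i = 4" | "i = 5" using i by linarith
  then show ?thesis
  proof cases
    case 1 then show ?thesis unfolding e using l ind01[of x]
      by (auto simp: sum_lessThan_6 adv_W_def adv_P_def adv_bias_def adv_state_def relu_def)
  next
    case 2 then show ?thesis unfolding e using l H mean5 mean2
      by (simp add: sum_lessThan_6 adv_W_def adv_P_def adv_bias_def adv_state_def relu_id algebra_simps)
  next
    case 3 then show ?thesis unfolding e using l H mean5 mean2 relu_mult_indicator[OF ind01[of x] H]
      by (simp add: sum_lessThan_6 adv_W_def adv_P_def adv_bias_def adv_state_def algebra_simps)
  next
    case 4 then show ?thesis unfolding e using l Q mean0 mean4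
      by (simp add: sum_lessThan_6 adv_W_def adv_P_def adv_bias_def adv_state_def relu_id algebra_simps)
  next
    case 5 then show ?thesis unfolding e using l Q mean0 mean4 relu_mult_indicator[OF ind01[of x] Q]
      by (simp add: sum_lessThan_6 adv_W_def adv_P_def adv_bias_def adv_state_def algebra_simps)
  next
    case 6 then show ?thesis unfolding e using l mean5 m
      by (simp add: sum_lessThan_6 adv_W_def adv_P_def adv_bias_def adv_state_def relu_id)
  qed
qed

lemma adv_net_hidden:
  fixes ind :: "real \<Rightarrow> real" and N S :: nat and hl K Bc M Mh \<beta> s :: real
  defines "F \<equiv> adv_net N S hl K Bc M Mh \<beta> s"
  assumes N: "N \<ge> 1" and hl: "0 < hl" "hl \<le> h" and ind01: "\<And>x. ind x = 0 \<or> ind x = 1"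
    and p: "p = grid_mean N ind" and m: "m = h * p" "0 \<le> m"
    and bnd: "\<And>l. l \<le> S \<Longrightarrow> 0 \<le> height_iter p m l \<and> height_iter p m l \<le> Bc
                               \<and> 0 \<le> sin_horner S K p l \<and> sin_horner S K p l \<le> Bc"
  shows "l \<le> S \<Longrightarrow> i < 6 \<Longrightarrow> fno_hidden F l (\<lambda>x. h * ind x) x i = adv_state ind h p m S K l x i"
proof (induction l arbitrary: x i)
  case 0
  then show ?case unfolding F_def by (intro adv_net_lift hl ind01)
next
  case (Suc l)
  then show ?case
    unfolding F_def using adv_net_layer[OF N ind01 p m] bnd[of "Suc l"] Suc.IH by simp
qed

definition ramp_gate :: "real \<Rightarrow> real \<Rightarrow> real \<Rightarrow> real \<Rightarrow> real" where
  "ramp_gate M Mh H G = relu (H + Mh * relu (M * G) - Mh * relu (M * G - 1) - Mh)"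

lemma adv_net_eval:
  fixes ind :: "real \<Rightarrow> real" and N S :: nat and hl K Bc M Mh \<beta> s :: real
  defines "F \<equiv> adv_net N S hl K Bc M Mh \<beta> s"
  assumes N: "N \<ge> 1" and hl: "0 < hl" "hl \<le> h" and ind01: "\<And>x. ind x = 0 \<or> ind x = 1"
    and p: "p = grid_mean N ind" and m: "m = h * p" "0 \<le> m"
    and bnd: "\<And>l. l \<le> S \<Longrightarrow> 0 \<le> height_iter p m l \<and> height_iter p m l \<le> Bc
                               \<and> 0 \<le> sin_horner S K p l \<and> sin_horner S K p l \<le> Bc"
  shows "fno_eval F (\<lambda>x. h * ind x) x = ramp_gate M Mh (height_iter p m S)
    (Re (exp (- \<i> * complex_of_real s) * dft N ind 1 * exp (\<i> * complex_of_real x))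
      - \<beta> * (sin_horner S K p S - K))"
proof -
  define G where "G y = Re (exp (- \<i> * complex_of_real s) * dft N ind 1 * exp (\<i> * complex_of_real y))
      - \<beta> * (sin_horner S K p S - K)" for y
  have IH: "\<And>x i. i < 6 \<Longrightarrow> fno_hidden F S (\<lambda>x. h * ind x) x i = adv_state ind h p m S K S x i"
    using adv_net_hidden[OF N hl ind01 p m bnd] unfolding F_def by blast
  have ch: "(\<lambda>y. fno_hidden F S (\<lambda>x. h * ind x) y j) = (\<lambda>y. adv_state ind h p m S K S y j)"
    if "j < 6" for j
    using IH that by auto
  have ch0: "(\<lambda>y. adv_state ind h p m S K S y 0) = ind" by (simp add: adv_state_def)
  have HS: "0 \<le> height_iter p m S" using bnd by auto
  have L1: "\<And>y. fno_hidden F (Suc S) (\<lambda>x. h * ind x) y 0 = relu (M * G y)"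
    "\<And>y. fno_hidden F (Suc S) (\<lambda>x. h * ind x) y 1 = relu (M * G y - 1)"
    "\<And>y. fno_hidden F (Suc S) (\<lambda>x. h * ind x) y 2 = height_iter p m S"
    unfolding fno_hidden.simps F_def fno_layer_adv_net using IH ch ch0 HS
    by (simp_all add: sum_lessThan_6 dft_zero F_def adv_W_def adv_P_def adv_bias_def adv_state_def
        G_def relu_id algebra_simps)
  have "fno_eval F (\<lambda>x. h * ind x) x = fno_hidden F (Suc (Suc S)) (\<lambda>x. h * ind x) x 0"
    unfolding fno_eval_def by (simp add: F_def adv_net_def sum_lessThan_6 del: fno_hidden.simps)
  also have "\<dots> = ramp_gate M Mh (height_iter p m S) (G x)"
    unfolding fno_hidden.simps(2)[of _ "Suc S"] F_def fno_layer_adv_net ramp_gate_def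
    using L1[unfolded F_def]
    by (simp add: sum_lessThan_6 adv_W_def adv_P_def adv_bias_def algebra_simps del: fno_hidden.simps)
  finally show ?thesis by (simp add: G_def)
qed

definition horner_shift :: "nat \<Rightarrow> real" where
  "horner_shift S = (\<Sum>k<S. \<bar>sin_coeff_2pi k\<bar>) + 1"

definition adv_fno :: "nat \<Rightarrow> nat \<Rightarrow> real \<Rightarrow> real \<Rightarrow> real \<Rightarrow> fno" where
  "adv_fno N S hl hu s =
     adv_net N S hl (horner_shift S) (2 * horner_shift S + hu) (real N) (hu + 1)
       (1 / (2 * real N * sin (pi / real N))) s"

lemma grid_mean_indicator_bounds:
  assumes "N \<ge> 1" and "\<And>x. ind x = 0 \<or> ind x = 1"
  shows "0 \<le> grid_mean N ind" "grid_mean N ind \<le> 1"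
proof -
  have "0 \<le> ind x" "ind x \<le> 1" for x using assms(2)[of x] by auto
  then have "0 \<le> (\<Sum>j=1..N. ind (2 * pi * real j / real N))"
    "(\<Sum>j=1..N. ind (2 * pi * real j / real N)) \<le> real N"
    using sum_bounded_above[of "{1..N}" "\<lambda>j. ind (2 * pi * real j / real N)" 1]
    by (auto intro: sum_nonneg)
  then show "0 \<le> grid_mean N ind" "grid_mean N ind \<le> 1"
    using assms(1) by (simp_all add: grid_mean_def)
qed

lemma adv_fno_eval:
  fixes ind :: "real \<Rightarrow> real" and N S :: nat
  defines "p \<equiv> grid_mean N ind" and "K \<equiv> horner_shift S"
  assumes N: "N \<ge> 1" and hl: "0 < hl" "hl \<le> h" "h \<le> hu" and ind01: "\<And>x. ind x = 0 \<or> ind x = 1"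
  shows "fno_eval (adv_fno N S hl hu s) (\<lambda>x. h * ind x) x = ramp_gate (real N) (hu + 1) (height_iter p (h * p) S)
    (Re (exp (- \<i> * complex_of_real s) * dft N ind 1 * exp (\<i> * complex_of_real x))
      - 1 / (2 * real N * sin (pi / real N)) * (sin_horner S K p S - K))"
proof -
  have p01: "0 \<le> p" "p \<le> 1" unfolding p_def using grid_mean_indicator_bounds[OF N ind01] by auto
  have K1: "1 \<le> K" unfolding K_def horner_shift_def by (simp add: sum_nonneg)
  have bnd: "0 \<le> height_iter p (h * p) l \<and> height_iter p (h * p) l \<le> 2 * K + hu
      \<and> 0 \<le> sin_horner S K p l \<and> sin_horner S K p l \<le> 2 * K + hu" if "l \<le> S" for l
  proof -
    have "\<bar>sin_horner S K p l - K\<bar> \<le> K - 1"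
      using sin_horner_dev[OF p01 that, of K] unfolding K_def horner_shift_def by simp
    moreover have "0 \<le> height_iter p (h * p) l" "height_iter p (h * p) l \<le> h"
      using height_iter_bounds[OF p01, of h] hl by auto
    ultimately show ?thesis using hl K1 by (simp add: abs_le_iff)
  qed
  have "0 \<le> h * p" using p01 hl by simp
  note net_eval = adv_net_eval[OF N hl(1,2) ind01 p_def[THEN meta_eq_to_obj_eq] refl this bnd]
  show ?thesis unfolding adv_fno_def K_def[symmetric] by (rule net_eval)
qed

lemma nn_integral_unif_real_le:
  fixes f :: "real \<Rightarrow> ennreal"
  assumes lh: "lo \<le> hi" and b: "\<And>x. lo \<le> x \<Longrightarrow> x \<le> hi \<Longrightarrow> f x \<le> c"
  shows "(\<integral>\<^sup>+x. f x \<partial>unif_real lo hi) \<le> c"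
proof -
  define M where "M = unif_real lo hi"
  have "prob_space M \<and> (AE x in M. lo \<le> x \<and> x \<le> hi)"
  proof (cases "lo < hi")
    case True
    then show ?thesis
      unfolding M_def unif_real_def by (auto intro: prob_space_uniform_measure AE_uniform_measureI)
  next
    case False
    then show ?thesis
      using lh unfolding M_def unif_real_def by (auto intro: prob_space_return simp: AE_return)
  qed
  then have ps: "prob_space M" and ae: "AE x in M. lo \<le> x \<and> x \<le> hi" by auto
  have "(\<integral>\<^sup>+x. f x \<partial>M) \<le> (\<integral>\<^sup>+x. c \<partial>M)"
    by (rule nn_integral_mono_AE) (use ae b in auto)
  also have "\<dots> = c" using prob_space.emeasure_space_1[OF ps] by simp
  finally show ?thesis unfolding M_def .
qed

lemma expect_mu_le:
  assumes "hl \<le> hu" "wl \<le> wu"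
    and "\<And>h w \<xi>. hl \<le> h \<Longrightarrow> h \<le> hu \<Longrightarrow> wl \<le> w \<Longrightarrow> w \<le> wu \<Longrightarrow> \<Phi> (ubar h w \<xi>) \<le> c"
  shows "expect_mu hl hu wl wu \<Phi> \<le> c"
  unfolding expect_mu_def by (intro nn_integral_unif_real_le assms) auto

lemma L1_dist_le_exceptional:
  assumes b: "\<And>y. 0 \<le> y \<Longrightarrow> y \<le> 2 * pi \<Longrightarrow> \<bar>f y - g y\<bar> \<le> e + (if y \<in> U then c else 0)"
    and e: "0 \<le> e" and c: "0 \<le> c" and U: "U \<in> sets lborel"
    and m: "emeasure lborel U \<le> ennreal m" "0 \<le> m"
  shows "L1_dist f g \<le> ennreal (2 * pi * e + c * m)"
proof -
  have "L1_dist f g \<le> (\<integral>\<^sup>+ x. ennreal e * indicator {0..2*pi} x + ennreal c * indicator U x \<partial>lborel)"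
    unfolding L1_dist_def
  proof (rule nn_integral_mono)
    fix x
    show "ennreal \<bar>f x - g x\<bar> * indicator {0..2 * pi} x \<le> ennreal e * indicator {0..2 * pi} x + ennreal c * indicator U x"
    proof (cases "x \<in> {0..2*pi}")
      case True
      then have "ennreal \<bar>f x - g x\<bar> \<le> ennreal (e + c * indicator U x)"
        using b[of x] by (intro ennreal_leI) (auto split: if_splits)
      also have "\<dots> = ennreal e + ennreal c * indicator U x"
        using e c by (simp add: ennreal_plus ennreal_mult indicator_def)
      finally show ?thesis using True by simp
    qed simp
  qed
  also have "\<dots> = ennreal e * ennreal (2 * pi) + ennreal c * emeasure lborel U"
    using U by (simp add: nn_integral_add nn_integral_cmult_indicator)
  also have "\<dots> \<le> ennreal e * ennreal (2 * pi) + ennreal c * ennreal m"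
    by (intro add_left_mono mult_left_mono m) auto
  also have "\<dots> = ennreal (2 * pi * e + c * m)"
    using e c m by (simp add: ennreal_plus ennreal_mult' mult.commute)
  finally show ?thesis .
qed

definition edge_nbhd :: "real \<Rightarrow> real \<Rightarrow> real \<Rightarrow> int \<Rightarrow> real set" where
  "edge_nbhd c w r k =
     {c + 2 * pi * of_int k + w / 2 - r .. c + 2 * pi * of_int k + w / 2 + r}
   \<union> {c + 2 * pi * of_int k - w / 2 - r .. c + 2 * pi * of_int k - w / 2 + r}"

text \<open>Only the periods k0, k0 + 1, k0 + 2 of the edge neighbourhoods can meet [0, 2 pi].\<close>
definition box_edge_nbhd :: "real \<Rightarrow> real \<Rightarrow> real \<Rightarrow> real set" where
  "box_edge_nbhd c w r =
     (\<Union>k\<in>{\<lceil>(- c - pi) / (2 * pi)\<rceil>..\<lceil>(- c - pi) / (2 * pi)\<rceil> + 2}. edge_nbhd c w r k)"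

lemma period_index_range:
  assumes y: "0 \<le> y" "y \<le> 2 * pi" and a: "\<bar>y - c - 2 * pi * of_int k\<bar> \<le> pi"
  shows "k \<in> {\<lceil>(- c - pi) / (2 * pi)\<rceil>..\<lceil>(- c - pi) / (2 * pi)\<rceil> + 2}"
proof -
  define k0 where "k0 = \<lceil>(- c - pi) / (2 * pi)\<rceil>"
  have "- c - pi \<le> 2 * pi * of_int k" using a y by linarith
  then have "(- c - pi) / (2 * pi) \<le> of_int k" by (simp add: divide_le_eq mult.commute)
  then have "k0 \<le> k" unfolding k0_def by (simp add: ceiling_le_iff)
  have "2 * pi * of_int k \<le> - c - pi + 2 * (2 * pi)" using a y by linarith
  then have "of_int k \<le> (- c - pi + 2 * (2 * pi)) / (2 * pi)" by (simp add: le_divide_eq mult.commute)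
  also have "\<dots> = (- c - pi) / (2 * pi) + 2" by (simp add: field_simps)
  finally have "real_of_int k < real_of_int k0 + 3"
    using le_of_int_ceiling[of "(- c - pi) / (2 * pi)"] unfolding k0_def by linarith
  with \<open>k0 \<le> k\<close> show ?thesis unfolding k0_def by simp
qed

lemma box_edge_nbhd_cover:
  assumes w: "0 \<le> w" "w / 2 + r \<le> pi" and y: "0 \<le> y" "y \<le> 2 * pi"
    and k: "\<bar>\<bar>y - c - 2 * pi * of_int k\<bar> - w / 2\<bar> \<le> r"
  shows "y \<in> box_edge_nbhd c w r"
proof -
  have "y \<in> edge_nbhd c w r k"
    using k unfolding edge_nbhd_def by (cases "y - c - 2 * pi * of_int k \<ge> 0") (auto simp: abs_le_iff)
  moreover have "\<bar>y - c - 2 * pi * of_int k\<bar> \<le> pi" using k w by linarith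
  ultimately show ?thesis
    unfolding box_edge_nbhd_def using period_index_range[OF y] by blast
qed

lemma box_edge_nbhd_sets: "box_edge_nbhd c w r \<in> sets lborel"
  unfolding box_edge_nbhd_def edge_nbhd_def by auto

lemma emeasure_box_edge_nbhd:
  assumes r: "0 \<le> r"
  shows "emeasure lborel (box_edge_nbhd c w r) \<le> ennreal (12 * r)"
proof -
  define k0 where "k0 = \<lceil>(- c - pi) / (2 * pi)\<rceil>"
  have edge: "emeasure lborel (edge_nbhd c w r k) \<le> ennreal (4 * r)" for k
  proof -
    have "emeasure lborel (edge_nbhd c w r k) \<le>
        emeasure lborel {c + 2 * pi * of_int k + w / 2 - r .. c + 2 * pi * of_int k + w / 2 + r}
      + emeasure lborel {c + 2 * pi * of_int k - w / 2 - r .. c + 2 * pi * of_int k - w / 2 + r}"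
      unfolding edge_nbhd_def by (rule emeasure_subadditive) auto
    also have "\<dots> = ennreal (4 * r)" using r by (simp add: ennreal_plus[symmetric])
    finally show ?thesis .
  qed
  have "emeasure lborel (box_edge_nbhd c w r) \<le> (\<Sum>k\<in>{k0..k0+2}. emeasure lborel (edge_nbhd c w r k))"
    unfolding box_edge_nbhd_def k0_def[symmetric]
    by (rule emeasure_subadditive_finite) (auto simp: edge_nbhd_def)
  also have "\<dots> \<le> (\<Sum>k\<in>{k0..k0+2}. ennreal (4 * r))" by (intro sum_mono edge)
  also have "\<dots> = ennreal 3 * ennreal (4 * r)" by simp
  also have "\<dots> = ennreal (12 * r)" using r by (subst ennreal_mult[symmetric]) auto
  finally show ?thesis .
qed

section \<open>Pointwise error\<close>

lemma ramp_gate_error: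
  assumes H: "0 \<le> H" "H \<le> h" and Mh: "h \<le> Mh" and M: "0 < M" and I: "I = 0 \<or> I = 1"
  shows "\<bar>h * I - ramp_gate M Mh H G\<bar>
     \<le> (h - H) + (if (I = 1 \<and> 1 / M \<le> G) \<or> (I = 0 \<and> G \<le> 0) then 0 else h)"
proof -
  define st where "st = relu (M * G) - relu (M * G - 1)"
  have st01: "0 \<le> st" "st \<le> 1" unfolding st_def relu_def by auto
  have gate: "ramp_gate M Mh H G = relu (H - Mh * (1 - st))"
    unfolding ramp_gate_def st_def by (simp add: algebra_simps)
  have "0 \<le> relu (H - Mh * (1 - st))" "relu (H - Mh * (1 - st)) \<le> H"
    using st01 H Mh by (auto simp: relu_def)
  moreover have "st = 1" if "I = 1" "1 / M \<le> G"
  proof -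
    have "1 \<le> M * G" using that M by (simp add: field_simps)
    then show ?thesis unfolding st_def relu_def by auto
  qed
  moreover have "st = 0" if "G \<le> 0"
  proof -
    have "M * G \<le> 0" using that M by (simp add: mult_nonneg_nonpos)
    then show ?thesis unfolding st_def relu_def by auto
  qed
  ultimately show ?thesis unfolding gate using I H Mh by (auto simp: relu_def)
qed

text \<open>The gate variable c1 cos (z - \<mu>) - Tq separates the points well inside the box from those well
  outside: Tq approximates c1 cos b with b close to w/2, and the cosine moves by at least
  sin \<alpha> * t / 2 over a distance t.\<close>
lemma cos_gate_inside:
  assumes c1: "0 < c1" and al: "0 < \<alpha>" "\<alpha> \<le> pi / 2" and t: "0 \<le> t" "t \<le> 2"
    and b: "\<alpha> \<le> b - t" "b + t \<le> pi - \<alpha>" and hb: "\<bar>b - w / 2\<bar> \<le> \<delta> / 2" and hmu: "\<bar>\<mu> - \<xi>\<bar> \<le> \<delta> / 2"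
    and hT: "\<bar>Tq - c1 * cos b\<bar> \<le> e1" and ht: "g + e1 \<le> c1 * (sin \<alpha> * t / 2)"
    and z: "\<bar>z - \<xi> - 2 * pi * of_int k\<bar> < w / 2 - \<delta> - t"
  shows "g \<le> c1 * cos (z - \<mu>) - Tq"
proof -
  have "\<bar>z - \<mu> - 2 * pi * of_int k\<bar> \<le> b - t" using z hb hmu by linarith
  then have "cos (b - t) \<le> cos \<bar>z - \<mu> - 2 * pi * of_int k\<bar>"
    using al b t by (intro cos_monotone_0_pi_le) auto
  then have "cos b + sin \<alpha> * t / 2 \<le> cos (z - \<mu>)"
    using cos_gap(1)[OF al t b] by (simp add: cos_diff)
  then have "c1 * (cos b + sin \<alpha> * t / 2) \<le> c1 * cos (z - \<mu>)" using c1 by (intro mult_left_mono) auto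
  then show ?thesis using hT ht by (simp add: algebra_simps abs_le_iff)
qed

lemma cos_gate_outside:
  assumes c1: "0 < c1" and al: "0 < \<alpha>" "\<alpha> \<le> pi / 2" and t: "0 \<le> t" "t \<le> 2"
    and b: "\<alpha> \<le> b - t" "b + t \<le> pi - \<alpha>" and hb: "\<bar>b - w / 2\<bar> \<le> \<delta> / 2" and hmu: "\<bar>\<mu> - \<xi>\<bar> \<le> \<delta> / 2"
    and hT: "\<bar>Tq - c1 * cos b\<bar> \<le> e1" and ht: "e1 < c1 * (sin \<alpha> * t / 2)"
    and z: "\<And>k::int. w / 2 + \<delta> + t < \<bar>z - \<xi> - 2 * pi * of_int k\<bar>"
  shows "c1 * cos (z - \<mu>) - Tq < 0"
proof -
  define k :: int where "k = \<lfloor>(z - \<mu> + pi) / (2 * pi)\<rfloor>"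
  define \<phi> where "\<phi> = z - \<mu> - 2 * pi * of_int k"
  have "of_int k \<le> (z - \<mu> + pi) / (2 * pi)" "(z - \<mu> + pi) / (2 * pi) < of_int k + 1"
    unfolding k_def by linarith+
  then have ph: "- pi \<le> \<phi>" "\<phi> \<le> pi"
    unfolding \<phi>_def by (simp_all add: le_divide_eq divide_less_eq algebra_simps)
  have "b + t \<le> \<bar>\<phi>\<bar>" using z[of k] hb hmu unfolding \<phi>_def by linarith
  then have "cos \<bar>\<phi>\<bar> \<le> cos (b + t)" using ph b al t by (intro cos_monotone_0_pi_le) auto
  then have "cos (z - \<mu>) \<le> cos b - sin \<alpha> * t / 2"
    using cos_gap(2)[OF al t b] unfolding \<phi>_def by (simp add: cos_diff)
  then have "c1 * cos (z - \<mu>) \<le> c1 * (cos b - sin \<alpha> * t / 2)" using c1 by (intro mult_left_mono) auto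
  then show ?thesis using hT ht by (simp add: algebra_simps abs_le_iff)
qed

lemma horner_threshold_error:
  assumes N: "4 \<le> N" and p: "0 \<le> p" "p \<le> 1"
  shows "\<bar>1 / (2 * real N * sin (pi / real N)) * (sin_horner S K p S - K)
           - sin (pi * p) / (real N * sin (pi / real N)) * cos (pi * p)\<bar> \<le> (2 * pi) ^ S / fact S / pi"
proof -
  define D where "D = real N * sin (pi / real N)"
  have D: "pi / 2 \<le> D" using grid_sin_half_bounds(1)[OF N] unfolding D_def .
  then have Dpos: "0 < D" using pi_gt_zero by linarith
  have "sin (pi * p) / D * cos (pi * p) = sin (2 * pi * p) / (2 * D)"
    using sin_double[of "pi * p"] Dpos by (simp add: field_simps)
  then have "1 / (2 * D) * (sin_horner S K p S - K) - sin (pi * p) / D * cos (pi * p)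
      = ((sin_horner S K p S - K) - sin (2 * pi * p)) / (2 * D)"
    using Dpos by (simp add: field_simps)
  then have "\<bar>1 / (2 * D) * (sin_horner S K p S - K) - sin (pi * p) / D * cos (pi * p)\<bar>
      = \<bar>(sin_horner S K p S - K) - sin (2 * pi * p)\<bar> / (2 * D)"
    using Dpos by (simp add: abs_divide)
  also have "\<dots> \<le> ((2 * pi) ^ S / fact S) / (2 * D)"
    using sin_horner_taylor[OF p] Dpos by (intro divide_right_mono) auto
  also have "\<dots> \<le> ((2 * pi) ^ S / fact S) / pi"
    using D Dpos by (intro divide_left_mono) auto
  finally show ?thesis unfolding D_def by (simp add: mult.assoc)
qed

lemma gate_pointwise_error:
  fixes c1 \<alpha> t b w \<delta> \<mu> \<xi> Tq e1 M Mh H h s y :: real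
  assumes c1: "0 < c1" and al: "0 < \<alpha>" "\<alpha> \<le> pi / 2" and t: "0 \<le> t" "t \<le> 2"
    and b: "\<alpha> \<le> b - t" "b + t \<le> pi - \<alpha>" and hb: "\<bar>b - w / 2\<bar> \<le> \<delta> / 2" and hmu: "\<bar>\<mu> - \<xi>\<bar> \<le> \<delta> / 2"
    and hT: "\<bar>Tq - c1 * cos b\<bar> \<le> e1" and M: "0 < M" and ht: "1 / M + e1 \<le> c1 * (sin \<alpha> * t / 2)"
    and w: "0 \<le> w" "w / 2 + (\<delta> + t) \<le> pi" and y: "0 \<le> y" "y \<le> 2 * pi"
    and H: "0 \<le> H" "H \<le> h" and Mh: "h \<le> Mh"
  shows "\<bar>h * box_ind w \<xi> (y - s) - ramp_gate M Mh H (c1 * cos (y - s - \<mu>) - Tq)\<bar>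
     \<le> (h - H) + (if y \<in> box_edge_nbhd (s + \<xi>) w (\<delta> + t) then h else 0)"
proof -
  let ?z = "y - s" and ?G = "c1 * cos (y - s - \<mu>) - Tq"
  have far: "\<exists>k::int. \<bar>\<bar>?z - \<xi> - 2 * pi * of_int k\<bar> - w / 2\<bar> \<le> \<delta> + t"
    if bad: "\<not> ((box_ind w \<xi> ?z = 1 \<and> 1 / M \<le> ?G) \<or> (box_ind w \<xi> ?z = 0 \<and> ?G \<le> 0))"
  proof (cases "box_ind w \<xi> ?z = 1")
    case True
    then obtain k :: int where k: "\<bar>?z - \<xi> - 2 * pi * of_int k\<bar> \<le> w / 2"
      unfolding box_ind_def by (auto split: if_splits)
    have "\<not> \<bar>?z - \<xi> - 2 * pi * of_int k\<bar> < w / 2 - \<delta> - t"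
      using cos_gate_inside[OF c1 al t b hb hmu hT _, of "1 / M" ?z k] ht bad True by auto
    then show ?thesis using k by (intro exI[of _ k]) linarith
  next
    case False
    then have "box_ind w \<xi> ?z = 0" using box_ind_01 by blast
    then have near: "\<forall>k::int. w / 2 < \<bar>?z - \<xi> - 2 * pi * of_int k\<bar>"
      unfolding box_ind_def by (auto split: if_splits simp: not_le)
    have "0 < ?G" using bad \<open>box_ind w \<xi> ?z = 0\<close> by auto
    moreover have "e1 < c1 * (sin \<alpha> * t / 2)" using ht M divide_pos_pos[of 1 M] by linarith
    ultimately have "\<not> (\<forall>k::int. w / 2 + \<delta> + t < \<bar>?z - \<xi> - 2 * pi * of_int k\<bar>)"
      using cos_gate_outside[OF c1 al t b hb hmu hT, of ?z] by force
    then obtain k :: int where "\<bar>?z - \<xi> - 2 * pi * of_int k\<bar> \<le> w / 2 + \<delta> + t"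
      by (auto simp: not_less)
    then show ?thesis using near[rule_format, of k] by (intro exI[of _ k]) linarith
  qed
  have edge: "y \<in> box_edge_nbhd (s + \<xi>) w (\<delta> + t)"
    if bad: "\<not> ((box_ind w \<xi> ?z = 1 \<and> 1 / M \<le> ?G) \<or> (box_ind w \<xi> ?z = 0 \<and> ?G \<le> 0))"
  proof -
    obtain k :: int where "\<bar>\<bar>?z - \<xi> - 2 * pi * of_int k\<bar> - w / 2\<bar> \<le> \<delta> + t" using far[OF bad] by blast
    then show ?thesis
      by (intro box_edge_nbhd_cover[OF w y, of _ k]) (simp add: algebra_simps)
  qed
  show ?thesis
    using ramp_gate_error[OF H Mh M box_ind_01, of w \<xi> ?z ?G] edge H by (auto split: if_splits)
qed

lemma adv_fno_box_output:
  assumes N: "4 \<le> N" and w: "2 * pi / real N \<le> w" "w + 2 * pi / real N \<le> 2 * pi"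
    and hl: "0 < hl" "hl \<le> h" "h \<le> hu"
  obtains n :: nat and \<mu> :: real where "1 \<le> n" "n \<le> N"
    "\<bar>\<mu> - \<xi>\<bar> \<le> pi / real N" "\<bar>pi * real n / real N - w / 2\<bar> \<le> pi / real N"
    "\<And>y. fno_eval (adv_fno N S hl hu s) (ubar h w \<xi>) y =
       ramp_gate (real N) (hu + 1) (height_iter (real n / real N) (h * (real n / real N)) S)
         (sin (pi * (real n / real N)) / (real N * sin (pi / real N)) * cos (y - s - \<mu>)
          - 1 / (2 * real N * sin (pi / real N))
            * (sin_horner S (horner_shift S) (real n / real N) S - horner_shift S))"
proof -
  define \<delta> where "\<delta> = 2 * pi / real N"
  have N2: "2 \<le> N" using N by simp
  obtain n \<mu> where n: "1 \<le> n" "n \<le> N" and mean: "grid_mean N (box_ind w \<xi>) = real n / real N"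
    and dft1: "dft N (box_ind w \<xi>) 1 = cis (- \<mu>) * complex_of_real (sin (real n * \<delta> / 2) / (real N * sin (\<delta> / 2)))"
    and "\<bar>\<mu> - \<xi>\<bar> \<le> \<delta> / 2" "\<bar>real n * \<delta> / 2 - w / 2\<bar> \<le> \<delta> / 2"
    using grid_coefficients_box_ind[OF N2 \<delta>_def, of w \<xi>] w unfolding \<delta>_def by blast
  moreover have "\<delta> / 2 = pi / real N" "real n * \<delta> / 2 = pi * real n / real N" unfolding \<delta>_def by simp_all
  moreover have "fno_eval (adv_fno N S hl hu s) (ubar h w \<xi>) y =
       ramp_gate (real N) (hu + 1) (height_iter (real n / real N) (h * (real n / real N)) S)
         (sin (pi * (real n / real N)) / (real N * sin (pi / real N)) * cos (y - s - \<mu>)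
          - 1 / (2 * real N * sin (pi / real N))
            * (sin_horner S (horner_shift S) (real n / real N) S - horner_shift S))" for y
  proof -
    have "exp (- \<i> * complex_of_real s) * dft N (box_ind w \<xi>) 1 * exp (\<i> * complex_of_real y)
        = complex_of_real (sin (pi * (real n / real N)) / (real N * sin (pi / real N))) * (cis (- s) * cis (- \<mu>) * cis y)"
      unfolding dft1 \<delta>_def by (simp add: cis_conv_exp algebra_simps)
    also have "cis (- s) * cis (- \<mu>) * cis y = cis (y - s - \<mu>)" by (simp add: cis_mult algebra_simps)
    finally have re: "Re (exp (- \<i> * complex_of_real s) * dft N (box_ind w \<xi>) 1 * exp (\<i> * complex_of_real y))
      = sin (pi * (real n / real N)) / (real N * sin (pi / real N)) * cos (y - s - \<mu>)"
      by simp
    have "fno_eval (adv_fno N S hl hu s) (\<lambda>x. h * box_ind w \<xi> x) y =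
        ramp_gate (real N) (hu + 1) (height_iter (grid_mean N (box_ind w \<xi>)) (h * grid_mean N (box_ind w \<xi>)) S)
          (Re (exp (- \<i> * complex_of_real s) * dft N (box_ind w \<xi>) 1 * exp (\<i> * complex_of_real y))
           - 1 / (2 * real N * sin (pi / real N))
             * (sin_horner S (horner_shift S) (grid_mean N (box_ind w \<xi>)) S - horner_shift S))"
      by (rule adv_fno_eval) (use N hl box_ind_01 in auto)
    then show ?thesis unfolding ubar_eq_box_ind re mean .
  qed
  ultimately show ?thesis using that by simp
qed

lemma dirichlet_gain_lower_bound:
  assumes N: "4 \<le> N" and a: "0 < a" "a \<le> pi / 2" and b: "a \<le> b" "b \<le> pi - a"
  shows "sin a / pi \<le> sin b / (real N * sin (pi / real N))"
proof -
  have "0 < sin a" using a by (intro sin_gt_zero) auto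
  moreover have "sin a \<le> sin b" using a b by (intro sin_ge_sin_interval) auto
  moreover have "0 < real N * sin (pi / real N)" "real N * sin (pi / real N) \<le> pi"
    using grid_sin_half_bounds[OF N] pi_gt_zero by linarith+
  ultimately show ?thesis
    by (meson divide_left_mono divide_right_mono order_trans less_imp_le mult_pos_pos pi_gt_zero)
qed

lemma gate_margin_from_width:
  assumes s0: "0 < s0" and c1: "s0 / pi \<le> c1" and t: "0 \<le> t" "2 * pi * e \<le> s0 ^ 2 * t"
  shows "e \<le> c1 * (s0 * t / 2)"
proof -
  have "e = s0 / pi * (s0 * t / 2) - (s0 ^ 2 * t - 2 * pi * e) / (2 * pi)"
    by (simp add: field_simps power2_eq_square)
  also have "\<dots> \<le> s0 / pi * (s0 * t / 2)" using t(2) by simp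
  also have "\<dots> \<le> c1 * (s0 * t / 2)" using c1 s0 t(1) by (intro mult_right_mono) auto
  finally show ?thesis .
qed

lemma adv_fno_pointwise_error:
  fixes N S :: nat
  assumes hl: "0 < hl" "hl \<le> h" "h \<le> hu" and w: "wl \<le> w" "w \<le> wu"
    and \<alpha>: "0 < \<alpha>" "\<alpha> \<le> wl / 4" "\<alpha> \<le> (2 * pi - wu) / 4"
    and N: "2 \<le> N" "2 * pi / real N \<le> \<alpha>"
    and t: "0 \<le> t" "t \<le> \<alpha>" "2 * pi * (1 / real N + (2 * pi) ^ S / fact S / pi) \<le> sin (\<alpha> / 2) ^ 2 * t"
  obtains p where "\<alpha> / (2 * pi) \<le> p" "p \<le> 1"
    "\<And>y. 0 \<le> y \<Longrightarrow> y \<le> 2 * pi \<Longrightarrow>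
       \<bar>G_adv a T (ubar h w \<xi>) y - fno_eval (adv_fno N S hl hu (a * T)) (ubar h w \<xi>) y\<bar>
         \<le> (h - height_iter p (h * p) S) + (if y \<in> box_edge_nbhd (a * T + \<xi>) w (2 * pi / real N + t) then hu else 0)"
proof -
  define \<delta> where "\<delta> = 2 * pi / real N"
  define s where "s = a * T"
  have Npos: "0 < real N" using N by simp
  have "4 * \<alpha> \<le> wl" "4 * \<alpha> \<le> 2 * pi - wu" using \<alpha> by simp_all
  then have \<alpha>pi: "\<alpha> \<le> pi / 4" using w by linarith
  have N4: "4 \<le> N"
  proof -
    have "2 * pi / real N \<le> 2 * pi / 8" using N(2) \<alpha>pi by linarith
    then show ?thesis using Npos by (simp add: field_simps)
  qed
  obtain n \<mu> where n: "1 \<le> n" "n \<le> N" and hmu: "\<bar>\<mu> - \<xi>\<bar> \<le> \<delta> / 2"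
    and hb: "\<bar>pi * real n / real N - w / 2\<bar> \<le> \<delta> / 2"
    and out: "\<And>y. fno_eval (adv_fno N S hl hu s) (ubar h w \<xi>) y =
       ramp_gate (real N) (hu + 1) (height_iter (real n / real N) (h * (real n / real N)) S)
         (sin (pi * (real n / real N)) / (real N * sin (pi / real N)) * cos (y - s - \<mu>)
          - 1 / (2 * real N * sin (pi / real N))
            * (sin_horner S (horner_shift S) (real n / real N) S - horner_shift S))"
    using adv_fno_box_output[OF N4 _ _ hl, of w \<xi> S s] \<alpha> w N unfolding \<delta>_def by auto
  define p where "p = real n / real N"
  define b where "b = pi * p"
  define c1 where "c1 = sin b / (real N * sin (pi / real N))"
  have p01: "0 \<le> p" "p \<le> 1" unfolding p_def using n Npos by auto
  have b: "\<alpha> / 2 \<le> b - t" "b + t \<le> pi - \<alpha> / 2" "\<bar>b - w / 2\<bar> \<le> \<delta> / 2"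
    using hb \<alpha> w N t unfolding b_def p_def \<delta>_def by (auto simp: abs_le_iff)
  have c1: "sin (\<alpha> / 2) / pi \<le> c1"
    unfolding c1_def using \<alpha> \<alpha>pi b t by (intro dirichlet_gain_lower_bound[OF N4]) auto
  have s0: "0 < sin (\<alpha> / 2)" using \<alpha> \<alpha>pi by (intro sin_gt_zero) auto
  have c1pos: "0 < c1" using order.strict_trans2[OF divide_pos_pos[OF s0 pi_gt_zero] c1] .
  have ht: "1 / real N + (2 * pi) ^ S / fact S / pi \<le> c1 * (sin (\<alpha> / 2) * t / 2)"
    using gate_margin_from_width[OF s0 c1 t(1,3)] .
  have "\<bar>G_adv a T (ubar h w \<xi>) y - fno_eval (adv_fno N S hl hu s) (ubar h w \<xi>) y\<bar>
      \<le> (h - height_iter p (h * p) S) + (if y \<in> box_edge_nbhd (s + \<xi>) w (\<delta> + t) then h else 0)"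
    if y: "0 \<le> y" "y \<le> 2 * pi" for y
    unfolding out unfolding G_adv_def ubar_eq_box_ind s_def[symmetric] p_def[symmetric] b_def[symmetric] c1_def[symmetric]
  proof (rule gate_pointwise_error[OF _ _ _ t(1) _ b hmu _ _ ht])
    show "\<bar>1 / (2 * real N * sin (pi / real N)) * (sin_horner S (horner_shift S) p S - horner_shift S)
        - c1 * cos b\<bar> \<le> (2 * pi) ^ S / fact S / pi"
      using horner_threshold_error[OF N4 p01] unfolding c1_def b_def .
  qed (use c1pos \<alpha> \<alpha>pi t w N Npos y hl height_iter_bounds[OF p01, of h] pi_less_4 in \<open>auto simp: \<delta>_def\<close>)
  moreover have "\<alpha> / (2 * pi) \<le> p" using b(1) t(1) unfolding b_def by (simp add: field_simps)
  ultimately show ?thesis using that p01(2) hl unfolding s_def \<delta>_def by fastforce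
qed

lemma adv_fno_sample_error:
  fixes N S :: nat
  assumes hl: "0 < hl" "hl \<le> h" "h \<le> hu" and w: "wl \<le> w" "w \<le> wu"
    and \<alpha>: "0 < \<alpha>" "\<alpha> \<le> wl / 4" "\<alpha> \<le> (2 * pi - wu) / 4"
    and N: "2 \<le> N" "2 * pi / real N \<le> \<alpha>"
    and t: "0 \<le> t" "t \<le> \<alpha>" "2 * pi * (1 / real N + (2 * pi) ^ S / fact S / pi) \<le> sin (\<alpha> / 2) ^ 2 * t"
  shows "L1_dist (G_adv a T (ubar h w \<xi>)) (fno_eval (adv_fno N S hl hu (a * T)) (ubar h w \<xi>))
           \<le> ennreal (2 * pi * hu * (1 - \<alpha> / (2 * pi)) ^ S + hu * (12 * (2 * pi / real N + t)))"
proof -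
  obtain p where p: "\<alpha> / (2 * pi) \<le> p" "p \<le> 1" and pointwise: "\<And>y. 0 \<le> y \<Longrightarrow> y \<le> 2 * pi \<Longrightarrow>
       \<bar>G_adv a T (ubar h w \<xi>) y - fno_eval (adv_fno N S hl hu (a * T)) (ubar h w \<xi>) y\<bar>
         \<le> (h - height_iter p (h * p) S) + (if y \<in> box_edge_nbhd (a * T + \<xi>) w (2 * pi / real N + t) then hu else 0)"
    using adv_fno_pointwise_error[OF hl w \<alpha> N t] by blast
  have p0: "0 \<le> p" using p(1) \<alpha> by (smt (verit) divide_nonneg_pos pi_gt_zero)
  have "L1_dist (G_adv a T (ubar h w \<xi>)) (fno_eval (adv_fno N S hl hu (a * T)) (ubar h w \<xi>))
      \<le> ennreal (2 * pi * (h - height_iter p (h * p) S) + hu * (12 * (2 * pi / real N + t)))"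
    using height_iter_bounds[OF p0 p(2), of h] hl N t(1)
    by (intro L1_dist_le_exceptional[OF pointwise] box_edge_nbhd_sets emeasure_box_edge_nbhd) auto
  moreover have "h - height_iter p (h * p) S \<le> hu * (1 - \<alpha> / (2 * pi)) ^ S"
  proof -
    have "(1 - p) ^ S \<le> (1 - \<alpha> / (2 * pi)) ^ S" using p by (intro power_mono) auto
    then show ?thesis unfolding height_iter_closed using hl p0 p(2) by (simp add: algebra_simps mult_mono)
  qed
  ultimately show ?thesis by (elim order_trans) (simp add: ennreal_leI mult.assoc)
qed

section \<open>Choice of grid size and depth\<close>

lemma adv_error_budget:
  fixes hu s0 N X R eT E \<epsilon> :: real
  assumes hu: "0 < hu" and s0: "0 < s0" and N: "0 < N" and X: "0 \<le> X" "X \<le> R"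
    and eT: "eT \<le> E * R"
    and AR: "(2 * pi * hu + 24 * hu * E / s0 ^ 2) * R \<le> \<epsilon> / 2"
    and BN: "24 * pi * hu * (1 + 1 / s0 ^ 2) / N \<le> \<epsilon> / 2"
  shows "2 * pi * hu * X + hu * (12 * (2 * pi / N + 2 * pi * (1 / N + eT / pi) / s0 ^ 2)) \<le> \<epsilon>"
proof -
  have "hu * (12 * (2 * pi / N + 2 * pi * (1 / N + eT / pi) / s0 ^ 2))
      = 24 * pi * hu * (1 + 1 / s0 ^ 2) / N + 24 * hu * eT / s0 ^ 2"
    using N s0 by (simp add: field_simps)
  moreover have "2 * pi * hu * X \<le> 2 * pi * hu * R" using X hu by simp
  moreover have "24 * hu * eT / s0 ^ 2 \<le> 24 * hu * (E * R) / s0 ^ 2"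
    using eT hu s0 by (simp add: divide_right_mono)
  moreover have "2 * pi * hu * R + 24 * hu * (E * R) / s0 ^ 2 = (2 * pi * hu + 24 * hu * E / s0 ^ 2) * R"
    by (simp add: field_simps)
  ultimately show ?thesis using AR BN by linarith
qed

lemma adv_fno_expected_error:
  fixes N S :: nat
  assumes h: "0 < hl" "hl \<le> hu" and w: "wl \<le> wu"
    and \<alpha>: "0 < \<alpha>" "\<alpha> \<le> wl / 4" "\<alpha> \<le> (2 * pi - wu) / 4"
    and N: "2 \<le> N" "2 * pi / real N \<le> \<alpha>"
    and t: "0 \<le> t" "t \<le> \<alpha>" "2 * pi * (1 / real N + (2 * pi) ^ S / fact S / pi) \<le> sin (\<alpha> / 2) ^ 2 * t"
  shows "expect_mu hl hu wl wu (\<lambda>u. L1_dist (G_adv a T u) (fno_eval (adv_fno N S hl hu (a * T)) u))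
           \<le> ennreal (2 * pi * hu * (1 - \<alpha> / (2 * pi)) ^ S + hu * (12 * (2 * pi / real N + t)))"
  using h w by (intro expect_mu_le adv_fno_sample_error[OF _ _ _ _ _ \<alpha> N t]) auto

lemma gate_width_le:
  assumes \<alpha>: "0 < \<alpha>" and s0: "0 < s0" and N: "4 * pi / (\<alpha> * s0 ^ 2) \<le> N"
    and eT: "eT \<le> \<alpha> * s0 ^ 2 / 4"
  shows "2 * pi * (1 / N + eT / pi) / s0 ^ 2 \<le> \<alpha>"
proof -
  have N0: "0 < N" using N \<alpha> s0 by (smt (verit) divide_pos_pos mult_pos_pos pi_gt_zero zero_less_power)
  then have "(2 * pi / N) / s0 ^ 2 \<le> \<alpha> / 2" using N \<alpha> s0 by (simp add: field_simps)
  moreover have "2 * eT / s0 ^ 2 \<le> \<alpha> / 2" using eT s0 by (simp add: field_simps)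
  moreover have "2 * pi * (1 / N + eT / pi) / s0 ^ 2 = (2 * pi / N) / s0 ^ 2 + 2 * eT / s0 ^ 2"
    using N0 s0 by (simp add: field_simps)
  ultimately show ?thesis by linarith
qed

lemma adv_fno_accuracy_at:
  fixes N S :: nat and \<alpha> :: real
  defines "s0 \<equiv> sin (\<alpha> / 2)" and "E \<equiv> exp (4 * pi)"
  assumes h: "0 < hl" "hl \<le> hu" and w: "wl \<le> wu"
    and \<alpha>: "0 < \<alpha>" "\<alpha> \<le> wl / 4" "\<alpha> \<le> (2 * pi - wu) / 4"
    and N: "2 \<le> N" "2 * pi / \<alpha> \<le> real N" "4 * pi / (\<alpha> * s0 ^ 2) \<le> real N"
      "24 * pi * hu * (1 + 1 / s0 ^ 2) / real N \<le> \<epsilon> / 2"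
    and \<rho>: "1 / 2 \<le> \<rho>" "1 - \<alpha> / (2 * pi) \<le> \<rho>" "E * \<rho> ^ S \<le> \<alpha> * s0 ^ 2 / 4"
      "(2 * pi * hu + 24 * hu * E / s0 ^ 2) * \<rho> ^ S \<le> \<epsilon> / 2"
  shows "expect_mu hl hu wl wu (\<lambda>u. L1_dist (G_adv a T u) (fno_eval (adv_fno N S hl hu (a * T)) u))
           \<le> ennreal \<epsilon>"
proof -
  define eT where "eT = (2 * pi) ^ S / fact S"
  define t where "t = 2 * pi * (1 / real N + eT / pi) / s0 ^ 2"
  have "4 * \<alpha> \<le> wl" "4 * \<alpha> \<le> 2 * pi - wu" using \<alpha> by simp_all
  then have "\<alpha> \<le> 2 * pi" using w pi_gt_zero by linarith
  then have X: "0 \<le> (1 - \<alpha> / (2 * pi)) ^ S" "(1 - \<alpha> / (2 * pi)) ^ S \<le> \<rho> ^ S"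
    using \<rho>(2) by (auto intro: power_mono)
  have s0: "0 < s0" unfolding s0_def using \<alpha> \<open>4 * \<alpha> \<le> wl\<close> \<open>4 * \<alpha> \<le> 2 * pi - wu\<close> w
    by (intro sin_gt_zero) auto
  have Npos: "0 < real N" using N by simp
  have eT: "eT \<le> E * \<rho> ^ S" unfolding eT_def E_def by (rule two_pi_power_div_fact_le[OF \<rho>(1)])
  have "2 * pi / real N \<le> \<alpha>" using N(2) \<alpha> Npos by (simp add: field_simps)
  moreover have "t \<le> \<alpha>" unfolding t_def using N(3) eT \<rho>(3) by (intro gate_width_le[OF \<alpha>(1) s0]) auto
  moreover have "0 \<le> t" "2 * pi * (1 / real N + eT / pi) \<le> sin (\<alpha> / 2) ^ 2 * t"
    unfolding t_def s0_def[symmetric] eT_def using s0 by simp_all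
  moreover have "2 * pi * hu * (1 - \<alpha> / (2 * pi)) ^ S + hu * (12 * (2 * pi / real N + t)) \<le> \<epsilon>"
    unfolding t_def using h by (intro adv_error_budget[OF _ s0 Npos X eT \<rho>(4) N(4)]) auto
  ultimately show ?thesis
    using adv_fno_expected_error[OF h w \<alpha> N(1)] unfolding eT_def by (meson ennreal_leI order_trans)
qed

lemma adv_fno_accuracy:
  fixes hl hu wl wu :: real
  assumes h: "0 < hl" "hl \<le> hu" and w: "0 < wl" "wl \<le> wu" "wu < 2 * pi"
  obtains Cn \<kappa> \<rho> :: real where "1 \<le> Cn" "0 < \<kappa>" "\<kappa> \<le> 1" "0 < \<rho>" "\<rho> < 1"
    "\<And>\<epsilon> N S. 0 < \<epsilon> \<Longrightarrow> \<epsilon> \<le> 1 / 2 \<Longrightarrow> Cn / \<epsilon> \<le> real N \<Longrightarrow> \<rho> ^ S \<le> \<kappa> * \<epsilon> \<Longrightarrow>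
       expect_mu hl hu wl wu (\<lambda>u. L1_dist (G_adv a T u) (fno_eval (adv_fno N S hl hu (a * T)) u))
         \<le> ennreal \<epsilon>"
proof -
  define \<alpha> where "\<alpha> = min (wl / 4) ((2 * pi - wu) / 4)"
  define s0 where "s0 = sin (\<alpha> / 2)"
  define E where "E = exp (4 * pi)"
  define A where "A = 2 * pi * hu + 24 * hu * E / s0 ^ 2"
  define B where "B = 24 * pi * hu * (1 + 1 / s0 ^ 2)"
  define \<rho> where "\<rho> = max (1 - \<alpha> / (2 * pi)) (1 / 2)"
  define \<kappa> where "\<kappa> = min 1 (min (1 / (2 * A)) (\<alpha> * s0 ^ 2 / (2 * E)))"
  define Cn where "Cn = 2 * B + 1 + 2 * pi / \<alpha> + 4 * pi / (\<alpha> * s0 ^ 2)"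
  have \<alpha>: "0 < \<alpha>" "\<alpha> \<le> wl / 4" "\<alpha> \<le> (2 * pi - wu) / 4" "\<alpha> < pi"
    using w unfolding \<alpha>_def by (auto simp: min_def)
  have s0: "0 < s0" unfolding s0_def using \<alpha> by (intro sin_gt_zero) auto
  have E: "0 < E" and A: "0 < A" and B: "0 < B"
    using h s0 by (auto simp: E_def A_def B_def add_pos_nonneg)
  have \<rho>: "0 < \<rho>" "\<rho> < 1" "1 / 2 \<le> \<rho>" "1 - \<alpha> / (2 * pi) \<le> \<rho>"
    using \<alpha> unfolding \<rho>_def by (auto simp: field_simps)
  have \<kappa>: "0 < \<kappa>" "\<kappa> \<le> 1" "\<kappa> \<le> 1 / (2 * A)" "\<kappa> \<le> \<alpha> * s0 ^ 2 / (2 * E)"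
    unfolding \<kappa>_def using A \<alpha> s0 E by auto
  have Cn: "1 \<le> Cn" "2 * B \<le> Cn" "2 * pi / \<alpha> \<le> Cn" "4 * pi / (\<alpha> * s0 ^ 2) \<le> Cn"
    unfolding Cn_def using B \<alpha> s0 by (auto simp: add_pos_nonneg)
  show ?thesis
  proof (rule that[OF Cn(1) \<kappa>(1,2) \<rho>(1,2)])
    fix \<epsilon> N S assume \<epsilon>: "0 < \<epsilon>" "\<epsilon> \<le> 1 / 2" and N: "Cn / \<epsilon> \<le> real N" and S: "\<rho> ^ S \<le> \<kappa> * \<epsilon>"
    have "2 * Cn \<le> Cn / \<epsilon>" "2 * B / \<epsilon> \<le> Cn / \<epsilon>" using \<epsilon> Cn by (simp_all add: field_simps)
    then have CnN: "2 * Cn \<le> real N" "2 * B / \<epsilon> \<le> real N" using N by linarith+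
    then have N2: "2 \<le> N" "2 * pi / \<alpha> \<le> real N" "4 * pi / (\<alpha> * s0 ^ 2) \<le> real N" using Cn by linarith+
    have NB: "24 * pi * hu * (1 + 1 / s0 ^ 2) / real N \<le> \<epsilon> / 2"
      using CnN(2) \<epsilon> N2(1) B unfolding B_def[symmetric] by (simp add: field_simps)
    have "\<kappa> * \<epsilon> \<le> \<alpha> * s0 ^ 2 / (2 * E) * (1 / 2)" using \<kappa>(1,4) \<epsilon> by (intro mult_mono) auto
    then have "E * \<rho> ^ S \<le> E * (\<alpha> * s0 ^ 2 / (2 * E) * (1 / 2))" using S E by (intro mult_left_mono) auto
    then have E\<rho>: "E * \<rho> ^ S \<le> \<alpha> * s0 ^ 2 / 4" using E by simp
    have "\<kappa> * \<epsilon> \<le> 1 / (2 * A) * \<epsilon>" using \<kappa>(3) \<epsilon> by (intro mult_right_mono) auto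
    then have "A * \<rho> ^ S \<le> A * (1 / (2 * A) * \<epsilon>)" using S A by (intro mult_left_mono) auto
    also have "\<dots> = \<epsilon> / 2" using A by simp
    finally have A\<rho>: "(2 * pi * hu + 24 * hu * E / s0 ^ 2) * \<rho> ^ S \<le> \<epsilon> / 2" unfolding A_def .
    show "expect_mu hl hu wl wu (\<lambda>u. L1_dist (G_adv a T u) (fno_eval (adv_fno N S hl hu (a * T)) u))
        \<le> ennreal \<epsilon>"
      by (rule adv_fno_accuracy_at[OF h w(2) \<alpha>(1-3), folded s0_def E_def, OF N2 NB \<rho>(3,4) E\<rho> A\<rho>])
  qed
qed

lemma power_le_of_log_bound:
  fixes \<rho> y :: real
  assumes "0 < \<rho>" "\<rho> < 1" "0 < y" "ln y / ln \<rho> \<le> real S"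
  shows "\<rho> ^ S \<le> y"
proof -
  have "ln y \<ge> real S * ln \<rho>" using assms by (simp add: divide_le_eq_1 mult.commute pos_divide_le_eq neg_divide_le_eq)
  then have "exp (real S * ln \<rho>) \<le> exp (ln y)" by simp
  then show ?thesis using assms by (simp add: exp_of_nat_mult)
qed

lemma affine_le_square:
  fixes L c c' l0 :: real
  assumes "0 < l0" "l0 \<le> L" "0 \<le> c" "0 \<le> c'"
  shows "c * L + c' \<le> (c / l0 + c' / l0 ^ 2) * L ^ 2"
proof -
  have L0: "0 < L" using assms by simp
  have "c * L \<le> c * (L ^ 2 / l0)"
    using assms L0 by (intro mult_left_mono) (simp_all add: field_simps power2_eq_square)
  moreover have "c' \<le> c' * (L ^ 2 / l0 ^ 2)"
    using mult_left_mono[of 1 "L ^ 2 / l0 ^ 2" c'] assms by (simp add: field_simps power_mono)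
  ultimately show ?thesis by (simp add: field_simps)
qed

lemma depth_for_geometric_decay:
  fixes \<kappa> \<rho> :: real
  assumes \<kappa>: "0 < \<kappa>" "\<kappa> \<le> 1" and \<rho>: "0 < \<rho>" "\<rho> < 1"
  obtains D :: real where "0 \<le> D"
    "\<And>\<epsilon>. 0 < \<epsilon> \<Longrightarrow> \<epsilon> \<le> 1 / 2 \<Longrightarrow> \<exists>S. \<rho> ^ S \<le> \<kappa> * \<epsilon> \<and> real S + 1 \<le> D * (ln (1 / \<epsilon>))\<^sup>2"
proof -
  define lam where "lam = - ln \<rho>"
  define lk where "lk = - ln \<kappa>"
  define l0 :: real where "l0 = ln 2"
  have lam: "0 < lam" and lk: "0 \<le> lk" and l0: "0 < l0"
    using \<rho> \<kappa> by (simp_all add: lam_def lk_def l0_def)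
  show ?thesis
  proof (rule that)
    show "0 \<le> (1 / lam) / l0 + (lk / lam + 2) / l0 ^ 2" using lam lk l0 by simp
    fix \<epsilon> :: real assume \<epsilon>: "0 < \<epsilon>" "\<epsilon> \<le> 1 / 2"
    define L where "L = ln (1 / \<epsilon>)"
    define q where "q = (lk + L) / lam"
    have L: "l0 \<le> L" unfolding L_def l0_def using \<epsilon> by (simp add: field_simps)
    have "ln (\<kappa> * \<epsilon>) = - (lk + L)" unfolding lk_def L_def using \<kappa> \<epsilon> by (simp add: ln_mult ln_div)
    then have "q = ln (\<kappa> * \<epsilon>) / ln \<rho>"
      unfolding q_def lam_def by (simp only: divide_minus_right minus_divide_left)
    then have "\<rho> ^ nat \<lceil>q\<rceil> \<le> \<kappa> * \<epsilon>"
      using \<rho> \<kappa> \<epsilon> real_nat_ceiling_ge[of q] by (intro power_le_of_log_bound) auto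
    moreover have "real (nat \<lceil>q\<rceil>) + 1 \<le> ((1 / lam) / l0 + (lk / lam + 2) / l0 ^ 2) * L\<^sup>2"
    proof -
      have "0 \<le> q" unfolding q_def using lam lk l0 L by simp
      then have "real (nat \<lceil>q\<rceil>) + 1 \<le> (1 / lam) * L + (lk / lam + 2)"
        unfolding q_def by (simp add: add_divide_distrib) linarith
      also have "\<dots> \<le> ((1 / lam) / l0 + (lk / lam + 2) / l0 ^ 2) * L\<^sup>2"
        using l0 L lam lk by (intro affine_le_square) auto
      finally show ?thesis .
    qed
    ultimately show "\<exists>S. \<rho> ^ S \<le> \<kappa> * \<epsilon> \<and> real S + 1 \<le> ((1 / lam) / l0 + (lk / lam + 2) / l0 ^ 2) * (ln (1 / \<epsilon>))\<^sup>2"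
      unfolding L_def by blast
  qed
qed

lemma grid_and_depth_choice:
  fixes Cn \<kappa> \<rho> :: real
  assumes Cn: "0 \<le> Cn" and \<kappa>: "0 < \<kappa>" "\<kappa> \<le> 1" and \<rho>: "0 < \<rho>" "\<rho> < 1"
  obtains C :: real where "0 < C"
    "\<And>\<epsilon>. 0 < \<epsilon> \<Longrightarrow> \<epsilon> \<le> 1 / 2 \<Longrightarrow> \<exists>N S. Cn / \<epsilon> \<le> real N \<and> real N \<le> C / \<epsilon>
        \<and> \<rho> ^ S \<le> \<kappa> * \<epsilon> \<and> real S + 1 \<le> C * (ln (1 / \<epsilon>))\<^sup>2"
proof -
  obtain D where D: "0 \<le> D" and depth: "\<And>\<epsilon>. 0 < \<epsilon> \<Longrightarrow> \<epsilon> \<le> 1 / 2 \<Longrightarrow>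
      \<exists>S. \<rho> ^ S \<le> \<kappa> * \<epsilon> \<and> real S + 1 \<le> D * (ln (1 / \<epsilon>))\<^sup>2"
    using depth_for_geometric_decay[OF \<kappa> \<rho>] by blast
  show ?thesis
  proof (rule that)
    show "0 < max (Cn + 1) D" using Cn by simp
    fix \<epsilon> :: real assume \<epsilon>: "0 < \<epsilon>" "\<epsilon> \<le> 1 / 2"
    have "real (nat \<lceil>Cn / \<epsilon>\<rceil>) = of_int \<lceil>Cn / \<epsilon>\<rceil>" using Cn \<epsilon> by simp
    then have "Cn / \<epsilon> \<le> real (nat \<lceil>Cn / \<epsilon>\<rceil>)" "real (nat \<lceil>Cn / \<epsilon>\<rceil>) \<le> Cn / \<epsilon> + 1" by linarith+
    moreover have "Cn / \<epsilon> + 1 \<le> (Cn + 1) / \<epsilon>" using \<epsilon> by (simp add: field_simps)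
    moreover have "(Cn + 1) / \<epsilon> \<le> max (Cn + 1) D / \<epsilon>" using \<epsilon> by (intro divide_right_mono) auto
    moreover have "D * (ln (1 / \<epsilon>))\<^sup>2 \<le> max (Cn + 1) D * (ln (1 / \<epsilon>))\<^sup>2" by (intro mult_right_mono) auto
    ultimately show "\<exists>N S. Cn / \<epsilon> \<le> real N \<and> real N \<le> max (Cn + 1) D / \<epsilon>
        \<and> \<rho> ^ S \<le> \<kappa> * \<epsilon> \<and> real S + 1 \<le> max (Cn + 1) D * (ln (1 / \<epsilon>))\<^sup>2"
      using depth[OF \<epsilon>] by (meson order_trans)
  qed
qed

lemma adv_fno_shape:
  "fno_N (adv_fno N S hl hu s) = N" "fno_kmax (adv_fno N S hl hu s) = 1"
  "fno_dv (adv_fno N S hl hu s) = 6" "fno_depth (adv_fno N S hl hu s) = S + 2"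
  "fno_size (adv_fno N S hl hu s) = 606 + 288 * S"
  by (simp_all add: adv_fno_def adv_net_def fno_depth_def fno_size_def)

lemma adv_fno_rates:
  fixes hl hu wl wu :: real
  assumes "0 < hl" "hl \<le> hu" "0 < wl" "wl \<le> wu" "wu < 2 * pi"
  obtains C :: real where "6 \<le> C"
    "\<And>\<epsilon>. 0 < \<epsilon> \<Longrightarrow> \<epsilon> \<le> 1 / 2 \<Longrightarrow> \<exists>N S. 1 \<le> N \<and> real N \<le> C / \<epsilon>
       \<and> real S + 2 \<le> C * (ln (1 / \<epsilon>))\<^sup>2 \<and> 606 + 288 * real S \<le> C * (ln (1 / \<epsilon>))\<^sup>2
       \<and> expect_mu hl hu wl wu (\<lambda>u. L1_dist (G_adv a T u) (fno_eval (adv_fno N S hl hu (a * T)) u))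
           \<le> ennreal \<epsilon>"
proof -
  obtain Cn \<kappa> \<rho> where Cn: "1 \<le> Cn" and \<kappa>: "0 < \<kappa>" "\<kappa> \<le> 1" and \<rho>: "0 < \<rho>" "\<rho> < 1"
    and accurate: "\<And>\<epsilon> N S. 0 < \<epsilon> \<Longrightarrow> \<epsilon> \<le> 1 / 2 \<Longrightarrow> Cn / \<epsilon> \<le> real N \<Longrightarrow> \<rho> ^ S \<le> \<kappa> * \<epsilon> \<Longrightarrow>
       expect_mu hl hu wl wu (\<lambda>u. L1_dist (G_adv a T u) (fno_eval (adv_fno N S hl hu (a * T)) u))
         \<le> ennreal \<epsilon>"
    using adv_fno_accuracy[OF assms] by blast
  obtain C where C: "0 < C" and choice: "\<And>\<epsilon>. 0 < \<epsilon> \<Longrightarrow> \<epsilon> \<le> 1 / 2 \<Longrightarrow> \<exists>N S. Cn / \<epsilon> \<le> real N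
      \<and> real N \<le> C / \<epsilon> \<and> \<rho> ^ S \<le> \<kappa> * \<epsilon> \<and> real S + 1 \<le> C * (ln (1 / \<epsilon>))\<^sup>2"
    using grid_and_depth_choice[OF _ \<kappa> \<rho>, of Cn] Cn by auto
  define C' where "C' = max 6 (606 * C)"
  show ?thesis
  proof (rule that)
    show "6 \<le> C'" unfolding C'_def by simp
    fix \<epsilon> :: real assume \<epsilon>: "0 < \<epsilon>" "\<epsilon> \<le> 1 / 2"
    then obtain N S where N: "Cn / \<epsilon> \<le> real N" "real N \<le> C / \<epsilon>" and S: "\<rho> ^ S \<le> \<kappa> * \<epsilon>"
      and depth: "real S + 1 \<le> C * (ln (1 / \<epsilon>))\<^sup>2" using choice by blast
    have "1 \<le> Cn / \<epsilon>" using Cn \<epsilon> by (simp add: field_simps)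
    then have "1 \<le> N" using N(1) by linarith
    moreover have "C / \<epsilon> \<le> C' / \<epsilon>" using \<epsilon> C unfolding C'_def by (intro divide_right_mono) auto
    then have "real N \<le> C' / \<epsilon>" using N(2) by linarith
    moreover have size: "606 * (real S + 1) \<le> C' * (ln (1 / \<epsilon>))\<^sup>2"
      using depth mult_right_mono[of "606 * C" C' "(ln (1 / \<epsilon>))\<^sup>2"] unfolding C'_def by auto
    then have "real S + 2 \<le> C' * (ln (1 / \<epsilon>))\<^sup>2" "606 + 288 * real S \<le> C' * (ln (1 / \<epsilon>))\<^sup>2"
      by (simp_all add: algebra_simps)
    ultimately show "\<exists>N S. 1 \<le> N \<and> real N \<le> C' / \<epsilon>
       \<and> real S + 2 \<le> C' * (ln (1 / \<epsilon>))\<^sup>2 \<and> 606 + 288 * real S \<le> C' * (ln (1 / \<epsilon>))\<^sup>2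
       \<and> expect_mu hl hu wl wu (\<lambda>u. L1_dist (G_adv a T u) (fno_eval (adv_fno N S hl hu (a * T)) u))
           \<le> ennreal \<epsilon>"
      using accurate[OF \<epsilon> N(1) S] by blast
  qed
qed

theorem theorem3p3:
  fixes a T hl hu wl wu :: real
  assumes "T > 0"
    and "0 < hl" and "hl \<le> hu"
    and "0 < wl" and "wl \<le> wu" and "wu < 2 * pi"
  shows "\<exists>C > 0. \<forall>\<epsilon>::real. 0 < \<epsilon> \<and> \<epsilon> \<le> 1/2 \<longrightarrow>
           (\<exists>F :: fno.
              fno_N F \<ge> 1 \<and> real (fno_N F) \<le> C / \<epsilon> \<and>
              fno_kmax F = 1 \<and>
              real (fno_dv F) \<le> C \<and>
              real (fno_depth F) \<le> C * (ln (1 / \<epsilon>))\<^sup>2 \<and>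
              real (fno_size F) \<le> C * (ln (1 / \<epsilon>))\<^sup>2 \<and>
              expect_mu hl hu wl wu (\<lambda>u. L1_dist (G_adv a T u) (fno_eval F u))
                \<le> ennreal \<epsilon>)"
proof -
  obtain C where C: "6 \<le> C" and rates: "\<And>\<epsilon>. 0 < \<epsilon> \<Longrightarrow> \<epsilon> \<le> 1 / 2 \<Longrightarrow> \<exists>N S. 1 \<le> N
      \<and> real N \<le> C / \<epsilon> \<and> real S + 2 \<le> C * (ln (1 / \<epsilon>))\<^sup>2 \<and> 606 + 288 * real S \<le> C * (ln (1 / \<epsilon>))\<^sup>2
      \<and> expect_mu hl hu wl wu (\<lambda>u. L1_dist (G_adv a T u) (fno_eval (adv_fno N S hl hu (a * T)) u))
          \<le> ennreal \<epsilon>"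
    using adv_fno_rates[OF assms(2-6)] by blast
  show ?thesis
  proof (intro exI[of _ C] conjI allI impI)
    fix \<epsilon> :: real assume "0 < \<epsilon> \<and> \<epsilon> \<le> 1 / 2"
    with rates obtain N S where "1 \<le> N" "real N \<le> C / \<epsilon>" "real S + 2 \<le> C * (ln (1 / \<epsilon>))\<^sup>2"
      "606 + 288 * real S \<le> C * (ln (1 / \<epsilon>))\<^sup>2"
      "expect_mu hl hu wl wu (\<lambda>u. L1_dist (G_adv a T u) (fno_eval (adv_fno N S hl hu (a * T)) u)) \<le> ennreal \<epsilon>"
      by blast
    with C show "\<exists>F. 1 \<le> fno_N F \<and> real (fno_N F) \<le> C / \<epsilon> \<and> fno_kmax F = 1 \<and> real (fno_dv F) \<le> C
        \<and> real (fno_depth F) \<le> C * (ln (1 / \<epsilon>))\<^sup>2 \<and> real (fno_size F) \<le> C * (ln (1 / \<epsilon>))\<^sup>2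
        \<and> expect_mu hl hu wl wu (\<lambda>u. L1_dist (G_adv a T u) (fno_eval F u)) \<le> ennreal \<epsilon>"
      by (intro exI[of _ "adv_fno N S hl hu (a * T)"]) (simp add: adv_fno_shape add.commute)
  qed (use C in simp)
qed

end
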